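(* Let $n\ge0$ and let $\mathfrak g$ be a Leibniz algebra whose Frattini subalgebra $\Phi(\mathfrak g)$ is trivial. Then, up to isomorphism, there is only one $n$-Lie-stem Leibniz algebra that is $n$-Lie-isoclinic to $\mathfrak g$, namely $\mathfrak g/\mathcal Z_n^{\mathsf{Lie}}(\mathfrak g)$.
   Context: All Leibniz algebras are over a field $\mathbb{K}$ with $\frac12\in\mathbb{K}$. A Leibniz algebra is a vector space $\mathfrak g$ with a bilinear bracket $[-,-]$ satisfying $[x,[y,z]]=[[x,y],z]-[[x,z],y]$. For $x,y\in\mathfrak g$ put $[x,y]_{lie}=[x,y]+[y,x]$. For two-sided ideals $\mathfrak m,\mathfrak n$ of $\mathfrak g$, $[\mathfrak m,\mathfrak n]_{\mathsf{Lie}}$ denotes the two-sided ideal of $\mathfrak g$ generated by $\{[m,x]_{lie}: m\in\mathfrak m, x\in\mathfrak n\}$. Lower Lie-central series: $\gamma_1^{\mathsf{Lie}}(\mathfrak g)=\mathfrak g$, $\gamma_i^{\mathsf{Lie}}(\mathfrak g)=[\gamma_{i-1}^{\mathsf{Lie}}(\mathfrak g),\mathfrak g]_{\mathsf{Lie}}$ for $i\ge2$. Upper Lie-central series: $\mathcal Z_0^{\mathsf{Lie}}(\mathfrak g)=0$, $\mathcal Z_i^{\mathsf{Lie}}(\mathfrak g)=\{x\in\mathfrak g:[x,y]_{lie}\in\mathcal Z_{i-1}^{\mathsf{Lie}}(\mathfrak g)\ \text{for all } y\in\mathfrak g\}$ for $i\ge1$. A Leibniz algebra $\mathfrak g$ is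 an $n$-Lie-stem Leibniz algebra if $\mathcal Z_n^{\mathsf{Lie}}(\mathfrak g)\subseteq\gamma_{n+1}^{\mathsf{Lie}}(\mathfrak g)$. The Frattini subalgebra $\Phi(\mathfrak g)$ is the intersection of all maximal subalgebras of $\mathfrak g$. For $n\ge0$, Leibniz algebras $\mathfrak g_1,\mathfrak g_2$ are $n$-Lie-isoclinic, written $\mathfrak g_1\sim_n\mathfrak g_2$, if there exist Leibniz algebra isomorphisms $\eta:\mathfrak g_1/\mathcal Z_n^{\mathsf{Lie}}(\mathfrak g_1)\to\mathfrak g_2/\mathcal Z_n^{\mathsf{Lie}}(\mathfrak g_2)$ and $\xi:\gamma_{n+1}^{\mathsf{Lie}}(\mathfrak g_1)\to\gamma_{n+1}^{\mathsf{Lie}}(\mathfrak g_2)$ such that $\xi([\cdots[[x_1,x_2]_{lie},x_3]_{lie},\ldots,x_{n+1}]_{lie})=[\cdots[[y_1,y_2]_{lie},y_3]_{lie},\ldots,y_{n+1}]_{lie}$ whenever $x_i\in\mathfrak g_1$, $y_i\in\mathfrak g_2$ satisfy $\eta(x_i+\mathcal Z_n^{\mathsf{Lie}}(\mathfrak g_1))=y_i+\mathcal Z_n^{\mathsf{Lie}}(\mathfrak g_2)$ for $i=1,\ldots,n+1$. *)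

theory Defs
  imports Main
begin

record ('k, 'v) leib =
  lcarrier :: "'v set"
  ladd :: "'v \<Rightarrow> 'v \<Rightarrow> 'v"
  lzero :: "'v"
  lneg :: "'v \<Rightarrow> 'v"
  lsmul :: "'k \<Rightarrow> 'v \<Rightarrow> 'v"
  lbr :: "'v \<Rightarrow> 'v \<Rightarrow> 'v"

definition leibniz_algebra :: "('k::field, 'v, 'z) leib_scheme \<Rightarrow> bool" where
  "leibniz_algebra L \<longleftrightarrow>
    (let V = lcarrier L; add = ladd L; z = lzero L; ng = lneg L; sm = lsmul L; br = lbr L in
     z \<in> V \<and>
     (\<forall>x\<in>V. \<forall>y\<in>V. add x y \<in> V) \<and>
     (\<forall>x\<in>V. ng x \<in> V) \<and>
     (\<forall>c. \<forall>x\<in>V. sm c x \<in> V) \<and>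
     (\<forall>x\<in>V. \<forall>y\<in>V. br x y \<in> V) \<and>
     (\<forall>x\<in>V. \<forall>y\<in>V. \<forall>w\<in>V. add (add x y) w = add x (add y w)) \<and>
     (\<forall>x\<in>V. \<forall>y\<in>V. add x y = add y x) \<and>
     (\<forall>x\<in>V. add z x = x) \<and>
     (\<forall>x\<in>V. add (ng x) x = z) \<and>
     (\<forall>c. \<forall>x\<in>V. \<forall>y\<in>V. sm c (add x y) = add (sm c x) (sm c y)) \<and>
     (\<forall>c d. \<forall>x\<in>V. sm (c + d) x = add (sm c x) (sm d x)) \<and>
     (\<forall>c d. \<forall>x\<in>V. sm (c * d) x = sm c (sm d x)) \<and>
     (\<forall>x\<in>V. sm 1 x = x) \<and>
     (\<forall>x\<in>V. \<forall>y\<in>V. \<forall>w\<in>V. br (add x y) w = add (br x w) (br y w)) \<and>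
     (\<forall>x\<in>V. \<forall>y\<in>V. \<forall>w\<in>V. br x (add y w) = add (br x y) (br x w)) \<and>
     (\<forall>c. \<forall>x\<in>V. \<forall>y\<in>V. br (sm c x) y = sm c (br x y)) \<and>
     (\<forall>c. \<forall>x\<in>V. \<forall>y\<in>V. br x (sm c y) = sm c (br x y)) \<and>
     (\<forall>x\<in>V. \<forall>y\<in>V. \<forall>w\<in>V. br x (br y w) = add (br (br x y) w) (ng (br (br x w) y))))"

definition lie :: "('k, 'v, 'z) leib_scheme \<Rightarrow> 'v \<Rightarrow> 'v \<Rightarrow> 'v" where
  "lie L x y = ladd L (lbr L x y) (lbr L y x)"

definition subspace :: "('k, 'v, 'z) leib_scheme \<Rightarrow> 'v set \<Rightarrow> bool" where
  "subspace L S \<longleftrightarrow> S \<subseteq> lcarrier L \<and> lzero L \<in> S \<and>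
     (\<forall>x\<in>S. \<forall>y\<in>S. ladd L x y \<in> S) \<and> (\<forall>c. \<forall>x\<in>S. lsmul L c x \<in> S)"

definition subalgebra :: "('k, 'v, 'z) leib_scheme \<Rightarrow> 'v set \<Rightarrow> bool" where
  "subalgebra L S \<longleftrightarrow> subspace L S \<and> (\<forall>x\<in>S. \<forall>y\<in>S. lbr L x y \<in> S)"

definition maximal_subalgebra :: "('k, 'v, 'z) leib_scheme \<Rightarrow> 'v set \<Rightarrow> bool" where
  "maximal_subalgebra L M \<longleftrightarrow> subalgebra L M \<and> M \<noteq> lcarrier L \<and>
     (\<forall>N. subalgebra L N \<and> M \<subseteq> N \<longrightarrow> N = M \<or> N = lcarrier L)"

text \<open>Frattini subalgebra: intersection of all maximal subalgebras
  (the whole algebra if there are none).\<close>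
definition frattini :: "('k, 'v, 'z) leib_scheme \<Rightarrow> 'v set" where
  "frattini L = lcarrier L \<inter> \<Inter>{M. maximal_subalgebra L M}"

definition ideal :: "('k, 'v, 'z) leib_scheme \<Rightarrow> 'v set \<Rightarrow> bool" where
  "ideal L I \<longleftrightarrow> subspace L I \<and>
     (\<forall>x\<in>lcarrier L. \<forall>i\<in>I. lbr L x i \<in> I \<and> lbr L i x \<in> I)"

definition ideal_gen :: "('k, 'v, 'z) leib_scheme \<Rightarrow> 'v set \<Rightarrow> 'v set" where
  "ideal_gen L X = \<Inter>{I. ideal L I \<and> X \<subseteq> I}"

definition lie_comm :: "('k, 'v, 'z) leib_scheme \<Rightarrow> 'v set \<Rightarrow> 'v set \<Rightarrow> 'v set" where
  "lie_comm L M N = ideal_gen L {lie L m x | m x. m \<in> M \<and> x \<in> N}"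

text \<open>Lower Lie-central series, indexed as in the paper: gamma L 1 = g
  (gamma L 0 is set to g as well; it is never used).\<close>
primrec gamma :: "('k, 'v, 'z) leib_scheme \<Rightarrow> nat \<Rightarrow> 'v set" where
  "gamma L 0 = lcarrier L"
| "gamma L (Suc i) = (if i = 0 then lcarrier L else lie_comm L (gamma L i) (lcarrier L))"

primrec zeta :: "('k, 'v, 'z) leib_scheme \<Rightarrow> nat \<Rightarrow> 'v set" where
  "zeta L 0 = {lzero L}"
| "zeta L (Suc i) = {x \<in> lcarrier L. \<forall>y\<in>lcarrier L. lie L x y \<in> zeta L i}"

definition lie_stem :: "nat \<Rightarrow> ('k, 'v, 'z) leib_scheme \<Rightarrow> bool" where
  "lie_stem n L \<longleftrightarrow> zeta L n \<subseteq> gamma L (Suc n)"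

definition sub :: "('k, 'v) leib \<Rightarrow> 'v set \<Rightarrow> ('k, 'v) leib" where
  "sub L S = L\<lparr>lcarrier := S\<rparr>"

definition coset :: "('k, 'v, 'z) leib_scheme \<Rightarrow> 'v set \<Rightarrow> 'v \<Rightarrow> 'v set" where
  "coset L I x = ladd L x ` I"

definition quot :: "('k, 'v, 'z) leib_scheme \<Rightarrow> 'v set \<Rightarrow> ('k, 'v set) leib" where
  "quot L I = \<lparr>
     lcarrier = coset L I ` lcarrier L,
     ladd = (\<lambda>A B. {ladd L a b | a b. a \<in> A \<and> b \<in> B}),
     lzero = I,
     lneg = (\<lambda>A. lneg L ` A),
     lsmul = (\<lambda>c A. {ladd L (lsmul L c a) i | a i. a \<in> A \<and> i \<in> I}),
     lbr = (\<lambda>A B. {ladd L (lbr L a b) i | a b i. a \<in> A \<and> b \<in> B \<and> i \<in> I}) \<rparr>"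

definition leib_hom :: "('v \<Rightarrow> 'w) \<Rightarrow> ('k, 'v, 'z1) leib_scheme \<Rightarrow> ('k, 'w, 'z2) leib_scheme \<Rightarrow> bool" where
  "leib_hom f L1 L2 \<longleftrightarrow> f ` lcarrier L1 \<subseteq> lcarrier L2 \<and>
     (\<forall>x\<in>lcarrier L1. \<forall>y\<in>lcarrier L1. f (ladd L1 x y) = ladd L2 (f x) (f y)) \<and>
     (\<forall>c. \<forall>x\<in>lcarrier L1. f (lsmul L1 c x) = lsmul L2 c (f x)) \<and>
     (\<forall>x\<in>lcarrier L1. \<forall>y\<in>lcarrier L1. f (lbr L1 x y) = lbr L2 (f x) (f y))"

definition leib_iso :: "('v \<Rightarrow> 'w) \<Rightarrow> ('k, 'v, 'z1) leib_scheme \<Rightarrow> ('k, 'w, 'z2) leib_scheme \<Rightarrow> bool" where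
  "leib_iso f L1 L2 \<longleftrightarrow> leib_hom f L1 L2 \<and> bij_betw f (lcarrier L1) (lcarrier L2)"

definition leib_isomorphic :: "('k, 'v, 'z1) leib_scheme \<Rightarrow> ('k, 'w, 'z2) leib_scheme \<Rightarrow> bool" where
  "leib_isomorphic L1 L2 \<longleftrightarrow> (\<exists>f. leib_iso f L1 L2)"

primrec lie_iter :: "('k, 'v, 'z) leib_scheme \<Rightarrow> (nat \<Rightarrow> 'v) \<Rightarrow> nat \<Rightarrow> 'v" where
  "lie_iter L xs 0 = xs 0"
| "lie_iter L xs (Suc k) = lie L (lie_iter L xs k) (xs (Suc k))"

text \<open>n-Lie-isoclinism (elements x_1..x_{n+1} are indexed 0..n here).\<close>
definition lie_isoclinic :: "nat \<Rightarrow> ('k, 'v) leib \<Rightarrow> ('k, 'w) leib \<Rightarrow> bool" where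
  "lie_isoclinic n L1 L2 \<longleftrightarrow>
    (\<exists>(\<eta> :: 'v set \<Rightarrow> 'w set) (\<xi> :: 'v \<Rightarrow> 'w).
       leib_iso \<eta> (quot L1 (zeta L1 n)) (quot L2 (zeta L2 n)) \<and>
       leib_iso \<xi> (sub L1 (gamma L1 (Suc n))) (sub L2 (gamma L2 (Suc n))) \<and>
       (\<forall>xs ys. (\<forall>i\<le>n. xs i \<in> lcarrier L1 \<and> ys i \<in> lcarrier L2 \<and>
                   \<eta> (coset L1 (zeta L1 n) (xs i)) = coset L2 (zeta L2 n) (ys i))
               \<longrightarrow> \<xi> (lie_iter L1 xs n) = lie_iter L2 ys n))"

end

theory Submission
  imports Defs
begin

text \<open>
  Every symmetrised bracket \<open>[x,y]_lie\<close> is a right annihilator, hence so is all of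
  \<open>\<gamma>\<^sub>2\<close>.  If \<open>z \<noteq> 0\<close> lies in \<open>Z\<^sub>1 \<inter> \<gamma>\<^sub>2\<close>, then \<open>z\<close> annihilates \<open>\<frak>g\<close> on both sides; a
  maximal subalgebra \<open>M\<close> avoiding \<open>z\<close> satisfies \<open>M + \<bbbK>z = \<frak>g\<close>, so \<open>M\<close> contains all
  brackets, is an ideal and so contains \<open>\<gamma>\<^sub>2\<close>, hence \<open>z\<close>.  Thus a trivial Frattini subalgebra
  forces \<open>Z\<^sub>1 \<inter> \<gamma>\<^sub>2 = 0\<close>, which gives \<open>Z\<^sub>n = Z\<^sub>1\<close> for \<open>n \<ge> 1\<close> and
  \<open>Z\<^sub>n \<inter> \<gamma>\<^sub>n\<^sub>+\<^sub>1 = 0\<close>.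

  Consequently \<open>\<frak>g/Z\<^sub>n\<close> has trivial \<open>Z\<^sub>n\<close>, as the upper series of \<open>\<frak>g\<close> is stationary from
  \<open>Z\<^sub>1\<close> on (so \<open>\<frak>g/Z\<^sub>n\<close> is \<open>n\<close>-Lie-stem), and the projection is injective on
  \<open>\<gamma>\<^sub>n\<^sub>+\<^sub>1(\<frak>g)\<close>, which yields an \<open>n\<close>-Lie-isoclinism with \<open>\<frak>g\<close>.
  Conversely, for an \<open>n\<close>-Lie-stem \<open>\<frak>h\<close> isoclinic to \<open>\<frak>g\<close> via \<open>(\<eta>,\<xi>)\<close>, the maps
  \<open>\<xi>\<close> and \<open>\<eta>\<close> are compatible with the projections on all of \<open>\<gamma>\<^sub>n\<^sub>+\<^sub>1(\<frak>h)\<close>; so \<open>\<xi>\<close>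
  sends \<open>Z\<^sub>n(\<frak>h) \<subseteq> \<gamma>\<^sub>n\<^sub>+\<^sub>1(\<frak>h)\<close> into \<open>Z\<^sub>n(\<frak>g) \<inter> \<gamma>\<^sub>n\<^sub>+\<^sub>1(\<frak>g) = 0\<close>, whence
  \<open>Z\<^sub>n(\<frak>h) = 0\<close> and \<open>\<eta>\<close> is an isomorphism \<open>\<frak>h \<cong> \<frak>g/Z\<^sub>n\<close>.
\<close>

definition span :: "('k, 'v, 'z) leib_scheme \<Rightarrow> 'v set \<Rightarrow> 'v set" where
  "span L X = \<Inter>{S. subspace L S \<and> X \<subseteq> S}"

definition lie_iters :: "('k, 'v, 'z) leib_scheme \<Rightarrow> nat \<Rightarrow> 'v set" where
  "lie_iters L k = {lie_iter L xs k | xs. \<forall>i. xs i \<in> lcarrier L}"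

definition leib_closed :: "('k, 'v, 'z) leib_scheme \<Rightarrow> bool" where
  "leib_closed A \<longleftrightarrow> (\<forall>x\<in>lcarrier A. \<forall>y\<in>lcarrier A. ladd A x y \<in> lcarrier A) \<and>
     (\<forall>c. \<forall>x\<in>lcarrier A. lsmul A c x \<in> lcarrier A) \<and>
     (\<forall>x\<in>lcarrier A. \<forall>y\<in>lcarrier A. lbr A x y \<in> lcarrier A)"

lemma lie_iter_cong: "(\<forall>i\<le>k. xs i = ys i) \<Longrightarrow> lie_iter L xs k = lie_iter L ys k"
  by (induction k) auto

lemma lie_iter_Suc_shift:
  "lie_iter L xs (Suc k) = lie_iter L (\<lambda>i. if i = 0 then lie L (xs 0) (xs 1) else xs (Suc i)) k"
  by (induction k) auto

lemma lie_iter_Suc_upd: "lie L (lie_iter L xs k) a = lie_iter L (xs(Suc k := a)) (Suc k)"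
  by (simp add: lie_iter_cong[of k "xs(Suc k := a)" xs])

lemma gamma_Suc_Suc:
  "gamma L (Suc (Suc k)) = ideal_gen L {lie L m x | m x. m \<in> gamma L (Suc k) \<and> x \<in> lcarrier L}"
  by (simp add: lie_comm_def)

lemma gamma_0_1 [simp]: "gamma L 0 = lcarrier L" "gamma L (Suc 0) = lcarrier L"
  by simp_all

declare gamma.simps [simp del]

lemma sub_simps [simp]:
  "lcarrier (sub L S) = S" "ladd (sub L S) = ladd L" "lsmul (sub L S) = lsmul L"
  "lbr (sub L S) = lbr L" "lzero (sub L S) = lzero L" "lneg (sub L S) = lneg L"
  by (simp_all add: sub_def)

lemma leib_closedD:
  assumes "leib_closed A" "x \<in> lcarrier A" "y \<in> lcarrier A"
  shows "ladd A x y \<in> lcarrier A" "lsmul A c x \<in> lcarrier A" "lbr A x y \<in> lcarrier A"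
  using assms unfolding leib_closed_def by blast+

lemma leib_closed_lie:
  "leib_closed A \<Longrightarrow> x \<in> lcarrier A \<Longrightarrow> y \<in> lcarrier A \<Longrightarrow> lie A x y \<in> lcarrier A"
  unfolding lie_def by (intro leib_closedD) (auto intro: leib_closedD)

lemma leib_closed_lie_iter:
  "leib_closed A \<Longrightarrow> \<forall>i\<le>k. xs i \<in> lcarrier A \<Longrightarrow> lie_iter A xs k \<in> lcarrier A"
  by (induction k) (auto intro: leib_closed_lie)

lemma leib_homD:
  assumes "leib_hom f A B" "x \<in> lcarrier A" "y \<in> lcarrier A"
  shows "f x \<in> lcarrier B" "f (ladd A x y) = ladd B (f x) (f y)"
    "f (lsmul A c x) = lsmul B c (f x)" "f (lbr A x y) = lbr B (f x) (f y)"
  using assms unfolding leib_hom_def by blast+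

lemma leib_hom_lie:
  "leib_hom f A B \<Longrightarrow> leib_closed A \<Longrightarrow> x \<in> lcarrier A \<Longrightarrow> y \<in> lcarrier A \<Longrightarrow>
   f (lie A x y) = lie B (f x) (f y)"
  unfolding lie_def by (simp add: leib_homD leib_closedD)

lemma leib_hom_lie_iter:
  "leib_hom f A B \<Longrightarrow> leib_closed A \<Longrightarrow> \<forall>i\<le>k. xs i \<in> lcarrier A \<Longrightarrow>
   f (lie_iter A xs k) = lie_iter B (\<lambda>i. f (xs i)) k"
  by (induction k) (simp_all add: leib_hom_lie leib_closed_lie_iter)

lemma leib_iso_inv_into:
  assumes iso: "leib_iso f A B" and cl: "leib_closed A"
  shows "leib_iso (inv_into (lcarrier A) f) B A"
proof -
  let ?g = "inv_into (lcarrier A) f"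
  have bij: "bij_betw f (lcarrier A) (lcarrier B)" and hom: "leib_hom f A B"
    using iso unfolding leib_iso_def by blast+
  have gA: "\<And>u. u \<in> lcarrier B \<Longrightarrow> ?g u \<in> lcarrier A"
    using bij_betw_inv_into[OF bij] bij_betwE by blast
  have fg: "\<And>u. u \<in> lcarrier B \<Longrightarrow> f (?g u) = u"
    using bij f_inv_into_f bij_betw_def by metis
  have gf: "\<And>x. x \<in> lcarrier A \<Longrightarrow> ?g (f x) = x"
    using bij bij_betw_inv_into_left by metis
  have "leib_hom ?g B A" unfolding leib_hom_def
  proof (intro conjI ballI allI)
    show "?g ` lcarrier B \<subseteq> lcarrier A" using gA by blast
    fix u v assume u: "u \<in> lcarrier B" and v: "v \<in> lcarrier B"
    show "?g (ladd B u v) = ladd A (?g u) (?g v)" "?g (lbr B u v) = lbr A (?g u) (?g v)"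
      using leib_homD[OF hom gA[OF u] gA[OF v]] fg u v gf leib_closedD[OF cl gA[OF u] gA[OF v]]
      by metis+
  next
    fix c u assume u: "u \<in> lcarrier B"
    show "?g (lsmul B c u) = lsmul A c (?g u)"
      using leib_homD[OF hom gA[OF u] gA[OF u]] fg u gf leib_closedD[OF cl gA[OF u] gA[OF u]]
      by metis
  qed
  then show ?thesis using bij_betw_inv_into[OF bij] unfolding leib_iso_def by blast
qed

lemma leib_hom_comp: "leib_hom f A B \<Longrightarrow> leib_hom g B C \<Longrightarrow> leib_hom (g \<circ> f) A C"
  unfolding leib_hom_def by (simp add: image_subset_iff)

lemma leib_iso_comp:
  assumes f: "leib_iso f A B" and g: "leib_iso g B C"
  shows "leib_iso (g \<circ> f) A C"
proof -
  have "leib_hom (g \<circ> f) A C"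
    using f g leib_hom_comp unfolding leib_iso_def by blast
  moreover have "bij_betw (g \<circ> f) (lcarrier A) (lcarrier C)"
    using f g unfolding leib_iso_def by (meson bij_betw_trans)
  ultimately show ?thesis unfolding leib_iso_def by blast
qed

lemma leib_hom_restrict: "leib_hom f A B \<Longrightarrow> S \<subseteq> lcarrier A \<Longrightarrow> leib_hom f (sub A S) B"
  unfolding leib_hom_def by (simp add: subset_iff) blast

lemma leib_hom_sub:
  "leib_hom f A B \<Longrightarrow> S \<subseteq> lcarrier A \<Longrightarrow> f ` S \<subseteq> T \<Longrightarrow> leib_hom f (sub A S) (sub B T)"
  unfolding leib_hom_def by (simp add: subset_iff)

lemma leib_closed_sub: "ideal L S \<Longrightarrow> leib_closed (sub L S)"
  unfolding leib_closed_def ideal_def subspace_def by (simp add: subset_iff)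

lemma subspace_sub: "subspace (sub L T) S \<Longrightarrow> T \<subseteq> lcarrier L \<Longrightarrow> subspace L S"
  unfolding subspace_def by auto

section \<open>Leibniz algebras\<close>

locale leibniz =
  fixes L :: "('k::field, 'v, 'z) leib_scheme"
  assumes leibniz: "leibniz_algebra L"
begin

abbreviation V where "V \<equiv> lcarrier L"
abbreviation pl (infixl "\<oplus>" 65) where "x \<oplus> y \<equiv> ladd L x y"
abbreviation z0 ("\<zero>") where "\<zero> \<equiv> lzero L"
abbreviation ng ("\<ominus> _" [81] 80) where "\<ominus> x \<equiv> lneg L x"
abbreviation sm (infixr "\<cdot>" 75) where "c \<cdot> x \<equiv> lsmul L c x"
abbreviation br ("\<lbrakk>_,_\<rbrakk>") where "\<lbrakk>x,y\<rbrakk> \<equiv> lbr L x y"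

lemma
  zero_closed [simp]: "\<zero> \<in> V" and
  add_closed [simp]: "x \<in> V \<Longrightarrow> y \<in> V \<Longrightarrow> x \<oplus> y \<in> V" and
  neg_closed [simp]: "x \<in> V \<Longrightarrow> \<ominus> x \<in> V" and
  smul_closed [simp]: "x \<in> V \<Longrightarrow> c \<cdot> x \<in> V" and
  br_closed [simp]: "x \<in> V \<Longrightarrow> y \<in> V \<Longrightarrow> \<lbrakk>x,y\<rbrakk> \<in> V" and
  add_assoc: "x \<in> V \<Longrightarrow> y \<in> V \<Longrightarrow> w \<in> V \<Longrightarrow> (x \<oplus> y) \<oplus> w = x \<oplus> (y \<oplus> w)" and
  add_comm: "x \<in> V \<Longrightarrow> y \<in> V \<Longrightarrow> x \<oplus> y = y \<oplus> x" and
  zero_add [simp]: "x \<in> V \<Longrightarrow> \<zero> \<oplus> x = x" and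
  neg_add [simp]: "x \<in> V \<Longrightarrow> (\<ominus> x) \<oplus> x = \<zero>" and
  smul_add: "x \<in> V \<Longrightarrow> y \<in> V \<Longrightarrow> c \<cdot> (x \<oplus> y) = c \<cdot> x \<oplus> c \<cdot> y" and
  add_smul: "x \<in> V \<Longrightarrow> (c + d) \<cdot> x = c \<cdot> x \<oplus> d \<cdot> x" and
  mult_smul: "x \<in> V \<Longrightarrow> (c * d) \<cdot> x = c \<cdot> (d \<cdot> x)" and
  one_smul [simp]: "x \<in> V \<Longrightarrow> 1 \<cdot> x = x" and
  br_add_left: "x \<in> V \<Longrightarrow> y \<in> V \<Longrightarrow> w \<in> V \<Longrightarrow> \<lbrakk>x \<oplus> y, w\<rbrakk> = \<lbrakk>x,w\<rbrakk> \<oplus> \<lbrakk>y,w\<rbrakk>" and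
  br_add_right: "x \<in> V \<Longrightarrow> y \<in> V \<Longrightarrow> w \<in> V \<Longrightarrow> \<lbrakk>x, y \<oplus> w\<rbrakk> = \<lbrakk>x,y\<rbrakk> \<oplus> \<lbrakk>x,w\<rbrakk>" and
  br_smul_left: "x \<in> V \<Longrightarrow> y \<in> V \<Longrightarrow> \<lbrakk>c \<cdot> x, y\<rbrakk> = c \<cdot> \<lbrakk>x,y\<rbrakk>" and
  br_smul_right: "x \<in> V \<Longrightarrow> y \<in> V \<Longrightarrow> \<lbrakk>x, c \<cdot> y\<rbrakk> = c \<cdot> \<lbrakk>x,y\<rbrakk>" and
  leibniz_identity: "x \<in> V \<Longrightarrow> y \<in> V \<Longrightarrow> w \<in> V \<Longrightarrow>
    \<lbrakk>x,\<lbrakk>y,w\<rbrakk>\<rbrakk> = \<lbrakk>\<lbrakk>x,y\<rbrakk>,w\<rbrakk> \<oplus> \<ominus> \<lbrakk>\<lbrakk>x,w\<rbrakk>,y\<rbrakk>"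
  using leibniz unfolding leibniz_algebra_def Let_def by auto

lemma add_left_comm: "x \<in> V \<Longrightarrow> y \<in> V \<Longrightarrow> w \<in> V \<Longrightarrow> x \<oplus> (y \<oplus> w) = y \<oplus> (x \<oplus> w)"
  by (metis add_assoc add_comm)

lemmas add_ac = add_assoc add_comm add_left_comm

lemma add_zero [simp]: "x \<in> V \<Longrightarrow> x \<oplus> \<zero> = x"
  by (metis add_comm zero_add zero_closed)

lemma add_neg [simp]: "x \<in> V \<Longrightarrow> x \<oplus> (\<ominus> x) = \<zero>"
  by (metis add_comm neg_add neg_closed)

lemma neg_add_cancel_left [simp]: "x \<in> V \<Longrightarrow> y \<in> V \<Longrightarrow> (\<ominus> x) \<oplus> (x \<oplus> y) = y"
  by (simp flip: add_assoc)

lemma add_neg_cancel_left [simp]: "x \<in> V \<Longrightarrow> y \<in> V \<Longrightarrow> x \<oplus> ((\<ominus> x) \<oplus> y) = y"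
  by (simp flip: add_assoc)

lemma add_left_cancel: "x \<in> V \<Longrightarrow> y \<in> V \<Longrightarrow> w \<in> V \<Longrightarrow> x \<oplus> y = x \<oplus> w \<longleftrightarrow> y = w"
  by (metis neg_add_cancel_left neg_closed)

lemma neg_unique: "x \<in> V \<Longrightarrow> y \<in> V \<Longrightarrow> x \<oplus> y = \<zero> \<Longrightarrow> y = \<ominus> x"
  by (metis add_neg add_left_cancel neg_closed)

lemma neg_neg [simp]: "x \<in> V \<Longrightarrow> \<ominus> (\<ominus> x) = x"
  by (metis neg_add neg_closed neg_unique)

lemma neg_add_distrib: "x \<in> V \<Longrightarrow> y \<in> V \<Longrightarrow> \<ominus> (x \<oplus> y) = \<ominus> x \<oplus> \<ominus> y"
  by (rule neg_unique[symmetric]) (simp_all add: add_ac)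

lemma zero_smul [simp]: "x \<in> V \<Longrightarrow> 0 \<cdot> x = \<zero>"
  by (metis add_smul add_left_cancel add_zero smul_closed zero_closed add_0_left)

lemma smul_zero [simp]: "c \<cdot> \<zero> = \<zero>"
  by (metis add_left_cancel add_zero smul_add smul_closed zero_add zero_closed)

lemma minus_one_smul: "x \<in> V \<Longrightarrow> (-1) \<cdot> x = \<ominus> x"
  by (metis add_smul neg_unique one_smul smul_closed zero_smul add.right_inverse)

lemma neg_zero [simp]: "\<ominus> \<zero> = \<zero>"
  by (metis add_zero neg_add neg_closed zero_closed)

lemma br_zero_left [simp]: "y \<in> V \<Longrightarrow> \<lbrakk>\<zero>,y\<rbrakk> = \<zero>"
  by (metis br_smul_left zero_smul zero_closed br_closed)

lemma br_zero_right [simp]: "x \<in> V \<Longrightarrow> \<lbrakk>x,\<zero>\<rbrakk> = \<zero>"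
  by (metis br_smul_right zero_smul zero_closed br_closed)

abbreviation lie_br ("\<lbrace>_,_\<rbrace>") where "\<lbrace>x,y\<rbrace> \<equiv> lie L x y"

lemma lie_closed [simp]: "x \<in> V \<Longrightarrow> y \<in> V \<Longrightarrow> \<lbrace>x,y\<rbrace> \<in> V"
  by (simp add: lie_def)

lemma lie_add_left: "x \<in> V \<Longrightarrow> y \<in> V \<Longrightarrow> w \<in> V \<Longrightarrow> \<lbrace>x \<oplus> y,w\<rbrace> = \<lbrace>x,w\<rbrace> \<oplus> \<lbrace>y,w\<rbrace>"
  by (simp add: lie_def br_add_left br_add_right add_ac)

lemma lie_smul_left: "x \<in> V \<Longrightarrow> y \<in> V \<Longrightarrow> \<lbrace>c \<cdot> x,y\<rbrace> = c \<cdot> \<lbrace>x,y\<rbrace>"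
  by (simp add: lie_def br_smul_left br_smul_right smul_add)

lemma lie_zero_left [simp]: "y \<in> V \<Longrightarrow> \<lbrace>\<zero>,y\<rbrace> = \<zero>"
  by (simp add: lie_def)

lemma br_lie_right: "a \<in> V \<Longrightarrow> x \<in> V \<Longrightarrow> y \<in> V \<Longrightarrow> \<lbrakk>a, \<lbrace>x,y\<rbrace>\<rbrakk> = \<zero>"
  by (simp add: lie_def br_add_right leibniz_identity add_ac)

lemma lie_iter_closed: "\<forall>i\<le>k. xs i \<in> V \<Longrightarrow> lie_iter L xs k \<in> V"
  by (induction k) auto

lemma leib_closed: "leib_closed L"
  unfolding leib_closed_def by simp

lemma subspace_neg: "subspace L S \<Longrightarrow> x \<in> S \<Longrightarrow> \<ominus> x \<in> S"
  unfolding subspace_def by (metis minus_one_smul subsetD)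

lemma subspaceD:
  assumes "subspace L S"
  shows "S \<subseteq> V" "\<zero> \<in> S" "x \<in> S \<Longrightarrow> y \<in> S \<Longrightarrow> x \<oplus> y \<in> S" "x \<in> S \<Longrightarrow> c \<cdot> x \<in> S"
  using assms unfolding subspace_def by blast+

lemma subspace_equalizer:
  assumes "leib_closed A" "leib_hom f A L" "leib_hom f' A L"
    and "lzero A \<in> lcarrier A" "f (lzero A) = f' (lzero A)"
  shows "subspace A {x \<in> lcarrier A. f x = f' x}"
  using assms leib_closedD[OF assms(1)] unfolding subspace_def by (simp add: leib_homD)

lemma subspace_carrier [simp]: "subspace L V"
  by (simp add: subspace_def)

lemma ideal_carrier [simp]: "ideal L V"
  by (simp add: ideal_def)

lemma ideal_zero [simp]: "ideal L {\<zero>}"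
  by (simp add: ideal_def subspace_def)

lemma ideal_subspace: "ideal L I \<Longrightarrow> subspace L I"
  by (simp add: ideal_def)

lemma ideal_ideal_gen: "X \<subseteq> V \<Longrightarrow> ideal L (ideal_gen L X)"
  unfolding ideal_gen_def ideal_def subspace_def by auto

lemma ideal_gen_superset: "X \<subseteq> ideal_gen L X"
  unfolding ideal_gen_def by auto

lemma ideal_gen_least: "ideal L I \<Longrightarrow> X \<subseteq> I \<Longrightarrow> ideal_gen L X \<subseteq> I"
  unfolding ideal_gen_def by auto

lemma subspace_span: "X \<subseteq> V \<Longrightarrow> subspace L (span L X)"
  unfolding span_def subspace_def by auto

lemma span_superset: "X \<subseteq> span L X"
  unfolding span_def by auto

lemma span_least: "subspace L S \<Longrightarrow> X \<subseteq> S \<Longrightarrow> span L X \<subseteq> S"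
  unfolding span_def by auto

lemma span_carrier: "span L V = V"
  using span_least[OF subspace_carrier, of V] span_superset[of V] by blast

lemma span_lie_closed:
  assumes "subspace L S" "a \<in> V" "X \<subseteq> V" "\<And>x. x \<in> X \<Longrightarrow> \<lbrace>x,a\<rbrace> \<in> S"
  shows "w \<in> span L X \<Longrightarrow> \<lbrace>w,a\<rbrace> \<in> S"
proof -
  have "subspace L {w \<in> V. \<lbrace>w,a\<rbrace> \<in> S}"
    using assms(1,2) unfolding subspace_def by (auto simp: lie_add_left lie_smul_left)
  moreover have "X \<subseteq> {w \<in> V. \<lbrace>w,a\<rbrace> \<in> S}" using assms(3,4) by blast
  ultimately show "w \<in> span L X \<Longrightarrow> \<lbrace>w,a\<rbrace> \<in> S" using span_least by blast
qed

section \<open>The lower Lie-central series\<close>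

lemma lie_iters_subset: "lie_iters L k \<subseteq> V"
  unfolding lie_iters_def using lie_iter_closed by blast

lemma lie_iters_0: "lie_iters L 0 = V"
proof
  show "V \<subseteq> lie_iters L 0"
  proof
    fix x assume "x \<in> V"
    then show "x \<in> lie_iters L 0" unfolding lie_iters_def by (intro CollectI exI[of _ "\<lambda>_. x"]) simp
  qed
qed (rule lie_iters_subset)

lemma lie_iters_lie: "w \<in> lie_iters L k \<Longrightarrow> a \<in> V \<Longrightarrow> \<lbrace>w,a\<rbrace> \<in> lie_iters L (Suc k)"
proof -
  assume "w \<in> lie_iters L k" and a: "a \<in> V"
  then obtain xs where w: "w = lie_iter L xs k" and xs: "\<forall>i. xs i \<in> V"
    unfolding lie_iters_def by blast
  have "\<forall>i. (xs(Suc k := a)) i \<in> V" using xs a by simp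
  then show ?thesis unfolding lie_iters_def w lie_iter_Suc_upd by blast
qed

lemma lie_iters_Suc_subset: "lie_iters L (Suc k) \<subseteq> lie_iters L k"
proof
  fix w assume "w \<in> lie_iters L (Suc k)"
  then obtain xs where w: "w = lie_iter L xs (Suc k)" and xs: "\<forall>i. xs i \<in> V"
    unfolding lie_iters_def by blast
  let ?ys = "\<lambda>i. if i = 0 then \<lbrace>xs 0, xs 1\<rbrace> else xs (Suc i)"
  have "\<forall>i. ?ys i \<in> V" using xs by simp
  then show "w \<in> lie_iters L k" unfolding w lie_iter_Suc_shift lie_iters_def by blast
qed

lemma lie_iters_antimono: "k \<le> m \<Longrightarrow> lie_iters L m \<subseteq> lie_iters L k"
  by (induction m) (auto simp: le_Suc_eq dest: subsetD[OF lie_iters_Suc_subset])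

lemma lie_iters_Suc_eq_lie: "w \<in> lie_iters L (Suc k) \<Longrightarrow> \<exists>u\<in>V. \<exists>v\<in>V. w = \<lbrace>u,v\<rbrace>"
proof -
  assume "w \<in> lie_iters L (Suc k)"
  then obtain xs where "w = \<lbrace>lie_iter L xs k, xs (Suc k)\<rbrace>" and "\<forall>i. xs i \<in> V"
    unfolding lie_iters_def by auto
  then show ?thesis using lie_iter_closed by blast
qed

lemma br_span_lie_iters_Suc:
  "w \<in> span L (lie_iters L (Suc k)) \<Longrightarrow> a \<in> V \<Longrightarrow> \<lbrakk>a,w\<rbrakk> = \<zero>"
proof -
  let ?R = "{w \<in> V. \<forall>a\<in>V. \<lbrakk>a,w\<rbrakk> = \<zero>}"
  have "subspace L ?R" unfolding subspace_def by (auto simp: br_add_right br_smul_right)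
  moreover have "lie_iters L (Suc k) \<subseteq> ?R" using lie_iters_Suc_eq_lie br_lie_right by fastforce
  ultimately have "span L (lie_iters L (Suc k)) \<subseteq> ?R" by (rule span_least)
  then show "w \<in> span L (lie_iters L (Suc k)) \<Longrightarrow> a \<in> V \<Longrightarrow> \<lbrakk>a,w\<rbrakk> = \<zero>" by blast
qed

lemma ideal_span_lie_iters_Suc: "ideal L (span L (lie_iters L (Suc k)))"
  unfolding ideal_def
proof (intro conjI ballI)
  let ?S = "span L (lie_iters L (Suc k))"
  show sS: "subspace L ?S" using subspace_span lie_iters_subset by blast
  fix x i assume x: "x \<in> V" and i: "i \<in> ?S"
  show "\<lbrakk>x,i\<rbrakk> \<in> ?S" using br_span_lie_iters_Suc[OF i x] subspaceD(2)[OF sS] by simp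
  have "\<lbrace>i,x\<rbrace> \<in> ?S"
    using span_lie_closed[OF sS x lie_iters_subset] lie_iters_lie[OF _ x]
      lie_iters_Suc_subset span_superset i by blast
  moreover have "\<lbrakk>x,i\<rbrakk> = \<zero>" using br_span_lie_iters_Suc[OF i x] .
  ultimately show "\<lbrakk>i,x\<rbrakk> \<in> ?S"
    using i x subspaceD(1)[OF sS] by (auto simp: lie_def)
qed

lemma gamma_subset: "gamma L k \<subseteq> V"
proof -
  have "gamma L (Suc j) \<subseteq> V" for j
  proof (induction j)
    case (Suc j)
    then have "{\<lbrace>m,x\<rbrace> | m x. m \<in> gamma L (Suc j) \<and> x \<in> V} \<subseteq> V" by (blast intro: lie_closed)
    then show ?case unfolding gamma_Suc_Suc by (rule ideal_gen_least[OF ideal_carrier])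
  qed simp
  then show ?thesis by (cases k) simp_all
qed

lemma ideal_gamma: "ideal L (gamma L k)"
proof -
  consider "k = 0" | "k = Suc 0" | j where "k = Suc (Suc j)" by (metis not0_implies_Suc)
  then show ?thesis
  proof cases
    case 3
    have "{\<lbrace>m,x\<rbrace> | m x. m \<in> gamma L (Suc j) \<and> x \<in> V} \<subseteq> V"
      using gamma_subset by (blast intro: lie_closed)
    then show ?thesis unfolding 3 gamma_Suc_Suc by (rule ideal_ideal_gen)
  qed simp_all
qed

lemma zero_in_gamma [simp]: "\<zero> \<in> gamma L k"
  by (rule subspaceD(2)[OF ideal_subspace[OF ideal_gamma]])

lemma lie_stem_if_zeta_trivial: "zeta L n = {\<zero>} \<Longrightarrow> lie_stem n L"
  unfolding lie_stem_def by simp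

lemma lie_in_gamma_Suc_Suc:
  "m \<in> gamma L (Suc k) \<Longrightarrow> x \<in> V \<Longrightarrow> \<lbrace>m,x\<rbrace> \<in> gamma L (Suc (Suc k))"
  unfolding gamma_Suc_Suc by (rule subsetD[OF ideal_gen_superset]) blast

lemma lie_iter_in_gamma: "\<forall>i\<le>k. xs i \<in> V \<Longrightarrow> lie_iter L xs k \<in> gamma L (Suc k)"
  by (induction k) (simp_all add: lie_in_gamma_Suc_Suc)

lemma gamma_eq_span_lie_iters: "gamma L (Suc k) = span L (lie_iters L k)"
proof (induction k)
  case 0
  then show ?case by (simp add: lie_iters_0 span_carrier)
next
  case (Suc k)
  have "gamma L (Suc (Suc k)) \<subseteq> span L (lie_iters L (Suc k))"
    unfolding gamma_Suc_Suc Suc.IH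
  proof (rule ideal_gen_least[OF ideal_span_lie_iters_Suc], safe)
    fix m x assume "m \<in> span L (lie_iters L k)" "x \<in> V"
    then show "\<lbrace>m,x\<rbrace> \<in> span L (lie_iters L (Suc k))"
      using span_lie_closed[OF subspace_span[OF lie_iters_subset] _ lie_iters_subset]
        lie_iters_lie span_superset by blast
  qed
  moreover have "span L (lie_iters L (Suc k)) \<subseteq> gamma L (Suc (Suc k))"
  proof (rule span_least)
    show "subspace L (gamma L (Suc (Suc k)))" by (rule ideal_subspace[OF ideal_gamma])
    show "lie_iters L (Suc k) \<subseteq> gamma L (Suc (Suc k))"
      unfolding lie_iters_def using lie_iter_in_gamma by blast
  qed
  ultimately show ?case by blast
qed

lemma gamma_Suc_antimono: "k \<le> m \<Longrightarrow> gamma L (Suc m) \<subseteq> gamma L (Suc k)"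
  unfolding gamma_eq_span_lie_iters
  using span_least[OF subspace_span[OF lie_iters_subset]] span_superset lie_iters_antimono
  by (meson subset_trans)

section \<open>The upper Lie-central series and the Frattini subalgebra\<close>

lemma lie_br_left_eq:
  assumes z: "z \<in> V" and a: "a \<in> V" and y: "y \<in> V"
  shows "\<lbrace>\<lbrakk>z,a\<rbrakk>,y\<rbrace> = \<lbrakk>\<lbrace>z,y\<rbrace>,a\<rbrakk> \<oplus> \<ominus> \<lbrace>z,\<lbrakk>y,a\<rbrakk>\<rbrace>"
proof -
  have l: "\<lbrace>\<lbrakk>z,a\<rbrakk>,y\<rbrace> = \<lbrakk>\<lbrakk>z,a\<rbrakk>,y\<rbrakk> \<oplus> (\<lbrakk>\<lbrakk>y,z\<rbrakk>,a\<rbrakk> \<oplus> \<ominus> \<lbrakk>\<lbrakk>y,a\<rbrakk>,z\<rbrakk>)"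
    unfolding lie_def using leibniz_identity[OF y z a] by simp
  have r1: "\<lbrakk>\<lbrace>z,y\<rbrace>,a\<rbrakk> = \<lbrakk>\<lbrakk>z,y\<rbrakk>,a\<rbrakk> \<oplus> \<lbrakk>\<lbrakk>y,z\<rbrakk>,a\<rbrakk>"
    unfolding lie_def using z a y by (simp add: br_add_left)
  have r2: "\<ominus> \<lbrace>z,\<lbrakk>y,a\<rbrakk>\<rbrace> = (\<ominus> \<lbrakk>\<lbrakk>z,y\<rbrakk>,a\<rbrakk> \<oplus> \<lbrakk>\<lbrakk>z,a\<rbrakk>,y\<rbrakk>) \<oplus> \<ominus> \<lbrakk>\<lbrakk>y,a\<rbrakk>,z\<rbrakk>"
    unfolding lie_def using z a y by (simp add: leibniz_identity neg_add_distrib)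
  have cancel: "(A \<oplus> B) \<oplus> ((\<ominus> A \<oplus> C) \<oplus> \<ominus> D) = C \<oplus> (B \<oplus> \<ominus> D)"
    if "A \<in> V" "B \<in> V" "C \<in> V" "D \<in> V" for A B C D
  proof -
    have "(A \<oplus> B) \<oplus> ((\<ominus> A \<oplus> C) \<oplus> \<ominus> D) = A \<oplus> (\<ominus> A \<oplus> (C \<oplus> (B \<oplus> \<ominus> D)))"
      using that by (simp add: add_ac)
    then show ?thesis using that by simp
  qed
  show ?thesis unfolding l r1 r2 using z a y by (simp add: cancel)
qed

lemma subspace_zeta: "subspace L (zeta L k)"
proof (induction k)
  case 0
  then show ?case by (simp add: subspace_def)
next
  case (Suc k)
  then show ?case
    unfolding subspace_def by (auto simp: lie_add_left lie_smul_left)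
qed

lemma zeta_Suc_mono: "zeta L k \<subseteq> zeta L (Suc k)"
  by (induction k) auto

lemma ideal_zeta: "ideal L (zeta L k)"
proof (induction k)
  case 0
  then show ?case by simp
next
  case (Suc k)
  have sk: "subspace L (zeta L k)" by (rule subspace_zeta)
  show ?case unfolding ideal_def
  proof (intro conjI ballI)
    show "subspace L (zeta L (Suc k))" by (rule subspace_zeta)
    fix a z assume a: "a \<in> V" and zz: "z \<in> zeta L (Suc k)"
    have z: "z \<in> V" and zl: "\<And>y. y \<in> V \<Longrightarrow> \<lbrace>z,y\<rbrace> \<in> zeta L k" using zz by auto
    show za: "\<lbrakk>z,a\<rbrakk> \<in> zeta L (Suc k)"
    proof (simp add: z a, intro ballI)
      fix y assume y: "y \<in> V"
      have "\<lbrakk>\<lbrace>z,y\<rbrace>, a\<rbrakk> \<in> zeta L k" using Suc.IH zl[OF y] a unfolding ideal_def by blast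
      moreover have "\<ominus> \<lbrace>z,\<lbrakk>y,a\<rbrakk>\<rbrace> \<in> zeta L k" using zl[of "\<lbrakk>y,a\<rbrakk>"] y a subspace_neg[OF sk] by simp
      ultimately show "\<lbrace>\<lbrakk>z,a\<rbrakk>,y\<rbrace> \<in> zeta L k"
        using lie_br_left_eq[OF z a y] subspaceD(3)[OF sk] by simp
    qed
    have "\<lbrace>z,a\<rbrace> \<in> zeta L (Suc k)" using zl[OF a] zeta_Suc_mono by blast
    moreover have "\<ominus> \<lbrakk>z,a\<rbrakk> \<in> zeta L (Suc k)" using za subspace_neg[OF subspace_zeta] by blast
    moreover have "\<lbrakk>a,z\<rbrakk> = \<lbrace>z,a\<rbrace> \<oplus> \<ominus> \<lbrakk>z,a\<rbrakk>" using a z by (simp add: lie_def add_ac)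
    ultimately show "\<lbrakk>a,z\<rbrakk> \<in> zeta L (Suc k)" using subspaceD(3)[OF subspace_zeta] by metis
  qed
qed

lemma br_add_annihilator:
  assumes "z \<in> V" "m \<in> V" "m' \<in> V" and ann: "\<And>a. a \<in> V \<Longrightarrow> \<lbrakk>z,a\<rbrakk> = \<zero> \<and> \<lbrakk>a,z\<rbrakk> = \<zero>"
  shows "\<lbrakk>m \<oplus> c \<cdot> z, m' \<oplus> c' \<cdot> z\<rbrakk> = \<lbrakk>m,m'\<rbrakk>"
  using assms by (simp add: br_add_left br_add_right br_smul_left br_smul_right)

lemma subalgebra_add_annihilator:
  assumes sM: "subalgebra L M" and z: "z \<in> V"
    and ann: "\<And>a. a \<in> V \<Longrightarrow> \<lbrakk>z,a\<rbrakk> = \<zero> \<and> \<lbrakk>a,z\<rbrakk> = \<zero>"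
  shows "subalgebra L {m \<oplus> c \<cdot> z | m c. m \<in> M}"
proof -
  have MV: "M \<subseteq> V" and M0: "\<zero> \<in> M" and Madd: "\<And>x y. x \<in> M \<Longrightarrow> y \<in> M \<Longrightarrow> x \<oplus> y \<in> M"
    and Msm: "\<And>c x. x \<in> M \<Longrightarrow> c \<cdot> x \<in> M" and Mbr: "\<And>x y. x \<in> M \<Longrightarrow> y \<in> M \<Longrightarrow> \<lbrakk>x,y\<rbrakk> \<in> M"
    using sM unfolding subalgebra_def subspace_def by blast+
  show ?thesis unfolding subalgebra_def subspace_def
  proof (intro conjI ballI allI)
    show "{m \<oplus> c \<cdot> z | m c. m \<in> M} \<subseteq> V" using MV z by auto
    have "\<zero> = \<zero> \<oplus> 0 \<cdot> z" using z by simp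
    then show "\<zero> \<in> {m \<oplus> c \<cdot> z | m c. m \<in> M}" using M0 by blast
    fix x y assume "x \<in> {m \<oplus> c \<cdot> z | m c. m \<in> M}" "y \<in> {m \<oplus> c \<cdot> z | m c. m \<in> M}"
    then obtain m c m' c' where x: "x = m \<oplus> c \<cdot> z" and y: "y = m' \<oplus> c' \<cdot> z"
      and m: "m \<in> M" "m' \<in> M" by blast
    have mV: "m \<in> V" "m' \<in> V" using m MV by auto
    have "x \<oplus> y = (m \<oplus> m') \<oplus> (c + c') \<cdot> z" unfolding x y using mV z by (simp add: add_smul add_ac)
    then show "x \<oplus> y \<in> {m \<oplus> c \<cdot> z | m c. m \<in> M}" using Madd m by blast
    have "\<lbrakk>x,y\<rbrakk> = \<lbrakk>m,m'\<rbrakk> \<oplus> 0 \<cdot> z" unfolding x y using br_add_annihilator[OF z mV ann] mV z by simp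
    then show "\<lbrakk>x,y\<rbrakk> \<in> {m \<oplus> c \<cdot> z | m c. m \<in> M}" using Mbr m by blast
  next
    fix d x assume "x \<in> {m \<oplus> c \<cdot> z | m c. m \<in> M}"
    then obtain m c where x: "x = m \<oplus> c \<cdot> z" and m: "m \<in> M" by blast
    have "d \<cdot> x = d \<cdot> m \<oplus> (d * c) \<cdot> z" unfolding x using m MV z by (auto simp: smul_add mult_smul)
    then show "d \<cdot> x \<in> {m \<oplus> c \<cdot> z | m c. m \<in> M}" using Msm m by blast
  qed
qed

text \<open>Maximality forces \<open>M + \<bbbK>z\<close> to be everything, and brackets only see the
  \<open>M\<close>-components.\<close>

lemma maximal_subalgebra_contains_brackets:
  assumes M: "maximal_subalgebra L M" and z: "z \<in> V" and zM: "z \<notin> M"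
    and ann: "\<And>a. a \<in> V \<Longrightarrow> \<lbrakk>z,a\<rbrakk> = \<zero> \<and> \<lbrakk>a,z\<rbrakk> = \<zero>"
    and u: "u \<in> V" and v: "v \<in> V"
  shows "\<lbrakk>u,v\<rbrakk> \<in> M"
proof -
  let ?N = "{m \<oplus> c \<cdot> z | m c. m \<in> M}"
  have sM: "subalgebra L M" and max: "\<And>N. subalgebra L N \<Longrightarrow> M \<subseteq> N \<Longrightarrow> N = M \<or> N = V"
    using M unfolding maximal_subalgebra_def by blast+
  have MV: "M \<subseteq> V" using sM unfolding subalgebra_def subspace_def by blast
  have "M \<subseteq> ?N"
  proof
    fix m assume "m \<in> M"
    moreover have "m = m \<oplus> 0 \<cdot> z" using \<open>m \<in> M\<close> MV z by auto
    ultimately show "m \<in> ?N" by blast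
  qed
  moreover have "z \<in> ?N"
  proof -
    have "z = \<zero> \<oplus> 1 \<cdot> z" using z by simp
    then show ?thesis using sM unfolding subalgebra_def subspace_def by blast
  qed
  ultimately have "?N = V" using max[OF subalgebra_add_annihilator[OF sM z ann]] zM by blast
  then have "u \<in> ?N" "v \<in> ?N" using u v by simp_all
  then obtain m c m' c' where uv: "u = m \<oplus> c \<cdot> z" "v = m' \<oplus> c' \<cdot> z" and m: "m \<in> M" "m' \<in> M"
    by blast
  have "\<lbrakk>u,v\<rbrakk> = \<lbrakk>m,m'\<rbrakk>" unfolding uv using br_add_annihilator[OF z _ _ ann] m MV by blast
  then show ?thesis using sM m unfolding subalgebra_def by simp
qed

lemma lie_in_gamma_2: "x \<in> V \<Longrightarrow> y \<in> V \<Longrightarrow> \<lbrace>x,y\<rbrace> \<in> gamma L (Suc (Suc 0))"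
  using lie_in_gamma_Suc_Suc[of x 0 y] by simp

lemma zeta_1_inter_gamma_2:
  assumes fr: "frattini L = {\<zero>}" and z1: "z \<in> zeta L (Suc 0)" and z2: "z \<in> gamma L (Suc (Suc 0))"
  shows "z = \<zero>"
proof (rule ccontr)
  assume "z \<noteq> \<zero>"
  have z: "z \<in> V" using z1 by simp
  have left: "\<And>a. a \<in> V \<Longrightarrow> \<lbrakk>a,z\<rbrakk> = \<zero>"
    using br_span_lie_iters_Suc z2 gamma_eq_span_lie_iters[of 1] by simp
  have "\<And>a. a \<in> V \<Longrightarrow> \<lbrakk>z,a\<rbrakk> \<oplus> \<lbrakk>a,z\<rbrakk> = \<zero>" using z1 by (simp add: lie_def)
  then have ann: "\<And>a. a \<in> V \<Longrightarrow> \<lbrakk>z,a\<rbrakk> = \<zero> \<and> \<lbrakk>a,z\<rbrakk> = \<zero>" using left z by simp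
  have "z \<notin> frattini L" using \<open>z \<noteq> \<zero>\<close> fr by blast
  then obtain M where M: "maximal_subalgebra L M" and zM: "z \<notin> M"
    using z unfolding frattini_def by blast
  have brM: "\<And>u v. u \<in> V \<Longrightarrow> v \<in> V \<Longrightarrow> \<lbrakk>u,v\<rbrakk> \<in> M"
    using maximal_subalgebra_contains_brackets[OF M z zM ann] by blast
  have sM: "subalgebra L M" using M unfolding maximal_subalgebra_def by blast
  then have "ideal L M" using brM unfolding ideal_def subalgebra_def subspace_def by blast
  moreover have "{\<lbrace>m,x\<rbrace> | m x. m \<in> gamma L (Suc 0) \<and> x \<in> V} \<subseteq> M"
    using brM sM unfolding subalgebra_def subspace_def lie_def by auto
  ultimately have "gamma L (Suc (Suc 0)) \<subseteq> M" unfolding gamma_Suc_Suc by (rule ideal_gen_least)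
  then show False using z2 zM by blast
qed

lemma zeta_Suc_eq_zeta_1:
  assumes fr: "frattini L = {\<zero>}"
  shows "zeta L (Suc k) = zeta L (Suc 0)"
proof (induction k)
  case (Suc k)
  have "x \<in> zeta L (Suc 0)" if x: "x \<in> zeta L (Suc (Suc k))" for x
  proof -
    have "\<lbrace>x,y\<rbrace> = \<zero>" if y: "y \<in> V" for y
    proof (rule zeta_1_inter_gamma_2[OF fr])
      show "\<lbrace>x,y\<rbrace> \<in> zeta L (Suc 0)"
        using x y Suc.IH unfolding zeta.simps(2)[of L "Suc k"] by blast
      show "\<lbrace>x,y\<rbrace> \<in> gamma L (Suc (Suc 0))" using x y by (simp add: lie_in_gamma_2)
    qed
    then show ?thesis using x by simp
  qed
  moreover have "zeta L (Suc 0) \<subseteq> zeta L (Suc (Suc k))"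
    using Suc.IH zeta_Suc_mono[of "Suc k"] by simp
  ultimately show ?case by blast
qed simp

lemma zeta_inter_gamma:
  assumes fr: "frattini L = {\<zero>}" and z1: "z \<in> zeta L n" and z2: "z \<in> gamma L (Suc n)"
  shows "z = \<zero>"
proof (cases n)
  case (Suc m)
  show ?thesis
  proof (rule zeta_1_inter_gamma_2[OF fr])
    show "z \<in> zeta L (Suc 0)" using z1 zeta_Suc_eq_zeta_1[OF fr, of m] Suc by (simp only:)
    show "z \<in> gamma L (Suc (Suc 0))" using z2 gamma_Suc_antimono[of 1 n] Suc by auto
  qed
qed (use z1 in simp)

section \<open>Quotients\<close>

lemma coset_self: "subspace L I \<Longrightarrow> x \<in> V \<Longrightarrow> x \<in> coset L I x"
proof -
  assume "subspace L I" "x \<in> V"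
  then have "\<zero> \<in> I" "x = x \<oplus> \<zero>" using subspaceD by auto
  then show ?thesis unfolding coset_def by (intro image_eqI[where f="ladd L x" and x=\<zero>]) auto
qed

lemma mem_coset_iff:
  assumes sI: "subspace L I" and x: "x \<in> V"
  shows "a \<in> coset L I x \<longleftrightarrow> a \<in> V \<and> \<ominus> x \<oplus> a \<in> I"
proof
  have IV: "I \<subseteq> V" using sI by (rule subspaceD(1))
  {
    assume "a \<in> coset L I x"
    then obtain i where a: "a = x \<oplus> i" and i: "i \<in> I" unfolding coset_def by blast
    have iv: "i \<in> V" using i IV by blast
    have "\<ominus> x \<oplus> a = i" unfolding a using x iv by simp
    then show "a \<in> V \<and> \<ominus> x \<oplus> a \<in> I" using x iv i a by simp
  }
  {
    assume h: "a \<in> V \<and> \<ominus> x \<oplus> a \<in> I"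
    have e: "a = x \<oplus> (\<ominus> x \<oplus> a)" using x h by simp
    have m: "\<ominus> x \<oplus> a \<in> I" using h by blast
    show "a \<in> coset L I x" unfolding coset_def by (rule image_eqI[where f="ladd L x", OF e m])
  }
qed

lemma coset_eq_iff:
  assumes sI: "subspace L I" and x: "x \<in> V" and y: "y \<in> V"
  shows "coset L I x = coset L I y \<longleftrightarrow> \<ominus> x \<oplus> y \<in> I"
proof
  have IV: "I \<subseteq> V" using sI by (rule subspaceD(1))
  have Iadd: "\<And>a b. a \<in> I \<Longrightarrow> b \<in> I \<Longrightarrow> a \<oplus> b \<in> I" using sI by (rule subspaceD(3))
  {
    assume "coset L I x = coset L I y"
    then have "y \<in> coset L I x" using coset_self[OF sI y] by simp
    then show "\<ominus> x \<oplus> y \<in> I" using mem_coset_iff[OF sI x] by blast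
  }
  {
    assume xy: "\<ominus> x \<oplus> y \<in> I"
    have yx: "\<ominus> y \<oplus> x \<in> I"
    proof -
      have "\<ominus> (\<ominus> x \<oplus> y) = \<ominus> y \<oplus> x" using x y by (simp add: neg_add_distrib add_comm)
      then show ?thesis using subspace_neg[OF sI xy] by simp
    qed
    show "coset L I x = coset L I y"
    proof (intro set_eqI iffI)
      fix a assume "a \<in> coset L I x"
      then have a: "a \<in> V" "\<ominus> x \<oplus> a \<in> I" using mem_coset_iff[OF sI x] by auto
      have e: "\<ominus> y \<oplus> a = (\<ominus> y \<oplus> x) \<oplus> (\<ominus> x \<oplus> a)" using a x y by (simp add: add_assoc)
      have "\<ominus> y \<oplus> a \<in> I" unfolding e by (rule Iadd[OF yx a(2)])
      then show "a \<in> coset L I y" using mem_coset_iff[OF sI y] a by blast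
    next
      fix a assume "a \<in> coset L I y"
      then have a: "a \<in> V" "\<ominus> y \<oplus> a \<in> I" using mem_coset_iff[OF sI y] by auto
      have e: "\<ominus> x \<oplus> a = (\<ominus> x \<oplus> y) \<oplus> (\<ominus> y \<oplus> a)" using a x y by (simp add: add_assoc)
      have "\<ominus> x \<oplus> a \<in> I" unfolding e by (rule Iadd[OF xy a(2)])
      then show "a \<in> coset L I x" using mem_coset_iff[OF sI x] a by blast
    qed
  }
qed

lemma coset_zero:
  assumes sI: "subspace L I" shows "coset L I \<zero> = I"
proof -
  have "ladd L \<zero> ` I = (\<lambda>x. x) ` I" using subspaceD(1)[OF sI] by (intro image_cong) auto
  then show ?thesis unfolding coset_def by simp
qed

lemma coset_eq_ideal: "subspace L I \<Longrightarrow> i \<in> I \<Longrightarrow> coset L I i = I"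
proof -
  assume sI: "subspace L I" and i: "i \<in> I"
  have iV: "i \<in> V" using subspaceD(1)[OF sI] i by blast
  have "\<ominus> \<zero> \<oplus> i \<in> I" using i iV by simp
  then have "coset L I \<zero> = coset L I i" using coset_eq_iff[OF sI zero_closed iV] by blast
  then show ?thesis using coset_zero[OF sI] by simp
qed

lemma cosetI: "i \<in> I \<Longrightarrow> x \<oplus> i \<in> coset L I x"
  unfolding coset_def by (rule imageI)

lemma cosetE: "a \<in> coset L I x \<Longrightarrow> (\<And>i. a = x \<oplus> i \<Longrightarrow> i \<in> I \<Longrightarrow> P) \<Longrightarrow> P"
  unfolding coset_def by blast

lemma coset_memI: "i \<in> I \<Longrightarrow> a = x \<oplus> i \<Longrightarrow> a \<in> coset L I x"
  using cosetI by simp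

lemma coset_add:
  assumes sI: "subspace L I" and x: "x \<in> V" and y: "y \<in> V"
  shows "{a \<oplus> b | a b. a \<in> coset L I x \<and> b \<in> coset L I y} = coset L I (x \<oplus> y)"
proof -
  have IV: "I \<subseteq> V" and I0: "\<zero> \<in> I" and Iadd: "\<And>a b. a \<in> I \<Longrightarrow> b \<in> I \<Longrightarrow> a \<oplus> b \<in> I"
    using subspaceD[OF sI] by auto
  show ?thesis
  proof (intro set_eqI iffI)
    fix w assume "w \<in> {a \<oplus> b | a b. a \<in> coset L I x \<and> b \<in> coset L I y}"
    then obtain a b where w: "w = a \<oplus> b" and ab: "a \<in> coset L I x" "b \<in> coset L I y" by blast
    obtain i where a: "a = x \<oplus> i" and i: "i \<in> I" using ab(1) by (rule cosetE)
    obtain j where b: "b = y \<oplus> j" and j: "j \<in> I" using ab(2) by (rule cosetE)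
    have iv: "i \<in> V" "j \<in> V" using i j IV by auto
    have "w = (x \<oplus> y) \<oplus> (i \<oplus> j)" unfolding w a b using iv x y by (simp add: add_ac)
    then show "w \<in> coset L I (x \<oplus> y)" by (rule coset_memI[OF Iadd[OF i j]])
  next
    fix w assume "w \<in> coset L I (x \<oplus> y)"
    then obtain i where w: "w = (x \<oplus> y) \<oplus> i" and i: "i \<in> I" by (rule cosetE)
    have iv: "i \<in> V" using i IV by auto
    have "w = (x \<oplus> i) \<oplus> (y \<oplus> \<zero>)" unfolding w using iv x y by (simp add: add_ac)
    moreover have "x \<oplus> i \<in> coset L I x" "y \<oplus> \<zero> \<in> coset L I y" using i I0 by (auto intro: cosetI)
    ultimately show "w \<in> {a \<oplus> b | a b. a \<in> coset L I x \<and> b \<in> coset L I y}" by blast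
  qed
qed

lemma coset_smul:
  assumes sI: "subspace L I" and x: "x \<in> V"
  shows "{c \<cdot> a \<oplus> i | a i. a \<in> coset L I x \<and> i \<in> I} = coset L I (c \<cdot> x)"
proof -
  have IV: "I \<subseteq> V" and I0: "\<zero> \<in> I" and Iadd: "\<And>a b. a \<in> I \<Longrightarrow> b \<in> I \<Longrightarrow> a \<oplus> b \<in> I"
    and Ism: "\<And>c a. a \<in> I \<Longrightarrow> c \<cdot> a \<in> I"
    using subspaceD[OF sI] by auto
  show ?thesis
  proof (intro set_eqI iffI)
    fix w assume "w \<in> {c \<cdot> a \<oplus> i | a i. a \<in> coset L I x \<and> i \<in> I}"
    then obtain a j where w: "w = c \<cdot> a \<oplus> j" and a: "a \<in> coset L I x" and j: "j \<in> I" by blast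
    obtain i where a: "a = x \<oplus> i" and i: "i \<in> I" using a by (rule cosetE)
    have iv: "i \<in> V" "j \<in> V" using i j IV by auto
    have "w = c \<cdot> x \<oplus> (c \<cdot> i \<oplus> j)" unfolding w a using iv x by (simp add: add_ac smul_add)
    then show "w \<in> coset L I (c \<cdot> x)" by (rule coset_memI[OF Iadd[OF Ism[OF i] j]])
  next
    fix w assume "w \<in> coset L I (c \<cdot> x)"
    then obtain i where w: "w = c \<cdot> x \<oplus> i" and i: "i \<in> I" by (rule cosetE)
    moreover have "x \<in> coset L I x" using coset_self[OF sI x] .
    ultimately show "w \<in> {c \<cdot> a \<oplus> i | a i. a \<in> coset L I x \<and> i \<in> I}" by blast
  qed
qed

lemma coset_neg:
  assumes sI: "subspace L I" and x: "x \<in> V"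
  shows "lneg L ` coset L I x = coset L I (\<ominus> x)"
proof -
  have IV: "I \<subseteq> V" using subspaceD(1)[OF sI] .
  show ?thesis
  proof (intro set_eqI iffI)
    fix w assume "w \<in> lneg L ` coset L I x"
    then obtain a where w: "w = \<ominus> a" and a: "a \<in> coset L I x" by blast
    obtain i where a: "a = x \<oplus> i" and i: "i \<in> I" using a by (rule cosetE)
    have iv: "i \<in> V" using i IV by auto
    have "w = \<ominus> x \<oplus> \<ominus> i" unfolding w a using iv x by (simp add: neg_add_distrib)
    then show "w \<in> coset L I (\<ominus> x)" by (rule coset_memI[OF subspace_neg[OF sI i]])
  next
    fix w assume "w \<in> coset L I (\<ominus> x)"
    then obtain i where w: "w = \<ominus> x \<oplus> i" and i: "i \<in> I" by (rule cosetE)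
    have iv: "i \<in> V" using i IV by auto
    have "w = \<ominus> (x \<oplus> \<ominus> i)" unfolding w using iv x by (simp add: neg_add_distrib)
    moreover have "x \<oplus> \<ominus> i \<in> coset L I x" by (rule cosetI[OF subspace_neg[OF sI i]])
    ultimately show "w \<in> lneg L ` coset L I x" by blast
  qed
qed

lemma coset_br:
  assumes iI: "ideal L I" and x: "x \<in> V" and y: "y \<in> V"
  shows "{\<lbrakk>a,b\<rbrakk> \<oplus> i | a b i. a \<in> coset L I x \<and> b \<in> coset L I y \<and> i \<in> I} = coset L I \<lbrakk>x,y\<rbrakk>"
proof -
  have sI: "subspace L I" using iI by (rule ideal_subspace)
  have IV: "I \<subseteq> V" and I0: "\<zero> \<in> I" and Iadd: "\<And>a b. a \<in> I \<Longrightarrow> b \<in> I \<Longrightarrow> a \<oplus> b \<in> I"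
    using subspaceD[OF sI] by auto
  have Ibr1: "\<And>u i. u \<in> V \<Longrightarrow> i \<in> I \<Longrightarrow> \<lbrakk>u,i\<rbrakk> \<in> I" and Ibr2: "\<And>u i. u \<in> V \<Longrightarrow> i \<in> I \<Longrightarrow> \<lbrakk>i,u\<rbrakk> \<in> I"
    using iI unfolding ideal_def by blast+
  show ?thesis
  proof (intro set_eqI iffI)
    fix w assume "w \<in> {\<lbrakk>a,b\<rbrakk> \<oplus> i | a b i. a \<in> coset L I x \<and> b \<in> coset L I y \<and> i \<in> I}"
    then obtain a b k where w: "w = \<lbrakk>a,b\<rbrakk> \<oplus> k" and ab: "a \<in> coset L I x" "b \<in> coset L I y" and k: "k \<in> I"
      by blast
    obtain i where a: "a = x \<oplus> i" and i: "i \<in> I" using ab(1) by (rule cosetE)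
    obtain j where b: "b = y \<oplus> j" and j: "j \<in> I" using ab(2) by (rule cosetE)
    have v: "i \<in> V" "j \<in> V" "k \<in> V" using i j k IV by auto
    have "w = \<lbrakk>x,y\<rbrakk> \<oplus> (\<lbrakk>x,j\<rbrakk> \<oplus> (\<lbrakk>i,y\<rbrakk> \<oplus> (\<lbrakk>i,j\<rbrakk> \<oplus> k)))"
      unfolding w a b using v x y by (simp add: br_add_left br_add_right add_ac)
    moreover have "\<lbrakk>x,j\<rbrakk> \<oplus> (\<lbrakk>i,y\<rbrakk> \<oplus> (\<lbrakk>i,j\<rbrakk> \<oplus> k)) \<in> I"
      by (intro Iadd Ibr1 Ibr2 x y i j k v)
    ultimately show "w \<in> coset L I \<lbrakk>x,y\<rbrakk>" by (intro coset_memI) 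
  next
    fix w assume "w \<in> coset L I \<lbrakk>x,y\<rbrakk>"
    then obtain i where w: "w = \<lbrakk>x,y\<rbrakk> \<oplus> i" and i: "i \<in> I" by (rule cosetE)
    moreover have "x \<in> coset L I x" "y \<in> coset L I y" using coset_self[OF sI] x y by auto
    ultimately show "w \<in> {\<lbrakk>a,b\<rbrakk> \<oplus> i | a b i. a \<in> coset L I x \<and> b \<in> coset L I y \<and> i \<in> I}" by blast
  qed
qed

lemma quot_carrier: "lcarrier (quot L I) = coset L I ` V" by (simp add: quot_def)

lemma quot_zero: "lzero (quot L I) = I" by (simp add: quot_def)

lemma quot_add: "subspace L I \<Longrightarrow> x \<in> V \<Longrightarrow> y \<in> V \<Longrightarrow>
   ladd (quot L I) (coset L I x) (coset L I y) = coset L I (x \<oplus> y)"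
  using coset_add by (simp add: quot_def)

lemma quot_smul: "subspace L I \<Longrightarrow> x \<in> V \<Longrightarrow>
   lsmul (quot L I) c (coset L I x) = coset L I (c \<cdot> x)"
  using coset_smul by (simp add: quot_def)

lemma quot_neg: "subspace L I \<Longrightarrow> x \<in> V \<Longrightarrow>
   lneg (quot L I) (coset L I x) = coset L I (\<ominus> x)"
  using coset_neg by (simp add: quot_def)

lemma quot_br: "ideal L I \<Longrightarrow> x \<in> V \<Longrightarrow> y \<in> V \<Longrightarrow>
   lbr (quot L I) (coset L I x) (coset L I y) = coset L I \<lbrakk>x,y\<rbrakk>"
  using coset_br by (simp add: quot_def)

lemma quot_lie:
  assumes iI: "ideal L I" and x: "x \<in> V" and y: "y \<in> V"
  shows "lie (quot L I) (coset L I x) (coset L I y) = coset L I (lie L x y)"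
proof -
  have sI: "subspace L I" using iI by (rule ideal_subspace)
  have "lie (quot L I) (coset L I x) (coset L I y) = ladd (quot L I) (coset L I \<lbrakk>x,y\<rbrakk>) (coset L I \<lbrakk>y,x\<rbrakk>)"
    unfolding lie_def quot_br[OF iI x y] quot_br[OF iI y x] ..
  also have "\<dots> = coset L I (lie L x y)" unfolding lie_def by (rule quot_add[OF sI]) (use x y in auto)
  finally show ?thesis .
qed

lemma leibniz_quot:
  assumes iI: "ideal L I" shows "leibniz_algebra (quot L I)"
proof -
  have sI: "subspace L I" using iI by (rule ideal_subspace)
  have z: "lzero (quot L I) = coset L I \<zero>" using coset_zero[OF sI] quot_zero by simp
  show ?thesis unfolding leibniz_algebra_def Let_def quot_carrier ball_simps(9) z
    by (intro conjI ballI allI)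
      (simp_all add: quot_add[OF sI] quot_smul[OF sI] quot_neg[OF sI] quot_br[OF iI]
        add_assoc add_smul mult_smul smul_add br_add_left br_add_right br_smul_left br_smul_right
        leibniz_identity add_comm[of _ "\<zero>"] add_comm[of "\<ominus> _"],
       metis add_comm)
qed

lemma leib_hom_coset: "ideal L I \<Longrightarrow> leib_hom (coset L I) L (quot L I)"
  unfolding leib_hom_def
  by (simp add: quot_carrier quot_add[OF ideal_subspace] quot_smul[OF ideal_subspace] quot_br)

lemma lie_iter_quot:
  assumes iI: "ideal L I" and ys: "\<forall>i\<le>k. ys i \<in> V"
  shows "lie_iter (quot L I) (\<lambda>i. coset L I (ys i)) k = coset L I (lie_iter L ys k)"
  using ys by (induction k) (simp_all add: quot_lie[OF iI] lie_iter_closed)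

lemma leib_iso_coset_zero: "leib_iso (coset L {\<zero>}) L (quot L {\<zero>})"
proof -
  have "inj_on (coset L {\<zero>}) V"
    by (rule inj_onI) (metis coset_eq_iff[OF ideal_subspace[OF ideal_zero]] add_neg_cancel_left
        add_zero singletonD)
  then show ?thesis
    using leib_hom_coset[OF ideal_zero] unfolding leib_iso_def bij_betw_def quot_carrier by simp
qed

lemma lie_iters_quot:
  assumes iI: "ideal L I"
  shows "lie_iters (quot L I) k = coset L I ` lie_iters L k"
proof
  show "lie_iters (quot L I) k \<subseteq> coset L I ` lie_iters L k"
  proof
    fix w assume "w \<in> lie_iters (quot L I) k"
    then obtain XS where w: "w = lie_iter (quot L I) XS k" and "\<forall>i. XS i \<in> coset L I ` V"
      unfolding lie_iters_def quot_carrier by blast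
    then have "\<forall>i. \<exists>y. y \<in> V \<and> XS i = coset L I y" by blast
    then obtain ys where ys: "\<forall>i. ys i \<in> V \<and> XS i = coset L I (ys i)"
      by (rule choice[THEN exE])
    then have "XS = (\<lambda>i. coset L I (ys i))" by auto
    then have "w = coset L I (lie_iter L ys k)" unfolding w using lie_iter_quot[OF iI] ys by simp
    then show "w \<in> coset L I ` lie_iters L k" using ys unfolding lie_iters_def by blast
  qed
  show "coset L I ` lie_iters L k \<subseteq> lie_iters (quot L I) k"
  proof
    fix w assume "w \<in> coset L I ` lie_iters L k"
    then obtain ys where w: "w = coset L I (lie_iter L ys k)" and ys: "\<forall>i. ys i \<in> V"
      unfolding lie_iters_def by blast
    then have "w = lie_iter (quot L I) (\<lambda>i. coset L I (ys i)) k"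
      using lie_iter_quot[OF iI, of k ys] by simp
    moreover have "\<forall>i. coset L I (ys i) \<in> lcarrier (quot L I)" using ys by (simp add: quot_carrier)
    ultimately show "w \<in> lie_iters (quot L I) k" unfolding lie_iters_def by blast
  qed
qed

lemma span_quot_image:
  assumes iI: "ideal L I" and X: "X \<subseteq> V"
  shows "span (quot L I) (coset L I ` X) = coset L I ` span L X"
proof -
  have sI: "subspace L I" using iI by (rule ideal_subspace)
  interpret Q: leibniz "quot L I" by (rule leibniz.intro, rule leibniz_quot[OF iI])
  have Q0: "lzero (quot L I) = coset L I \<zero>" using coset_zero[OF sI] quot_zero by simp
  have sS: "subspace L (span L X)" using subspace_span[OF X] .
  show ?thesis
  proof
    have SV: "span L X \<subseteq> V" using subspaceD(1)[OF sS] .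
    have "subspace (quot L I) (coset L I ` span L X)"
      unfolding subspace_def quot_carrier Q0
    proof (intro conjI ballI allI)
      fix A B assume "A \<in> coset L I ` span L X" "B \<in> coset L I ` span L X"
      then obtain a b where "A = coset L I a" "B = coset L I b" "a \<in> span L X" "b \<in> span L X"
        by blast
      moreover from this have "a \<in> V" "b \<in> V" using SV by auto
      ultimately show "ladd (quot L I) A B \<in> coset L I ` span L X"
        using subspaceD(3)[OF sS] by (simp add: quot_add[OF sI])
    next
      fix c A assume "A \<in> coset L I ` span L X"
      then obtain a where "A = coset L I a" "a \<in> span L X" by blast
      moreover from this have "a \<in> V" using SV by auto
      ultimately show "lsmul (quot L I) c A \<in> coset L I ` span L X"
        using subspaceD(4)[OF sS] by (simp add: quot_smul[OF sI])
    qed (use SV subspaceD(2)[OF sS] in auto)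
    then show "span (quot L I) (coset L I ` X) \<subseteq> coset L I ` span L X"
      by (rule Q.span_least) (use span_superset in blast)
  next
    let ?S = "span (quot L I) (coset L I ` X)"
    have sQ: "subspace (quot L I) ?S"
      using X by (intro Q.subspace_span) (auto simp: quot_carrier)
    have "subspace L {x \<in> V. coset L I x \<in> ?S}"
      unfolding subspace_def using Q.subspaceD[OF sQ]
      by (auto simp: Q0 quot_add[OF sI, symmetric] quot_smul[OF sI, symmetric])
    then have "span L X \<subseteq> {x \<in> V. coset L I x \<in> ?S}"
      by (rule span_least) (use X Q.span_superset in blast)
    then show "coset L I ` span L X \<subseteq> ?S" by blast
  qed
qed

lemma gamma_quot:
  assumes "ideal L I"
  shows "gamma (quot L I) (Suc k) = coset L I ` gamma L (Suc k)"
proof -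
  interpret Q: leibniz "quot L I" by (rule leibniz.intro, rule leibniz_quot[OF assms])
  show ?thesis unfolding gamma_eq_span_lie_iters Q.gamma_eq_span_lie_iters lie_iters_quot[OF assms]
    by (rule span_quot_image[OF assms lie_iters_subset])
qed

lemma inj_on_coset:
  assumes "subspace L I" "subspace L J" "I \<inter> J \<subseteq> {\<zero>}"
  shows "inj_on (coset L I) J"
proof (rule inj_onI)
  fix x y assume x: "x \<in> J" and y: "y \<in> J" and "coset L I x = coset L I y"
  have xy: "x \<in> V" "y \<in> V" using x y subspaceD(1)[OF assms(2)] by auto
  then have "\<ominus> x \<oplus> y \<in> I" using coset_eq_iff[OF assms(1)] \<open>coset L I x = coset L I y\<close> by blast
  moreover have "\<ominus> x \<oplus> y \<in> J" using subspaceD(3)[OF assms(2) subspace_neg[OF assms(2) x] y] .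
  ultimately have "\<ominus> x \<oplus> y = \<zero>" using assms(3) by blast
  then have "x \<oplus> (\<ominus> x \<oplus> y) = x" using xy by simp
  then show "x = y" using xy by simp
qed

lemma zeta_quot_zeta_trivial:
  assumes absorb: "zeta L (Suc n) \<subseteq> zeta L n"
  shows "zeta (quot L (zeta L n)) k = {lzero (quot L (zeta L n))}"
proof (induction k)
  case 0
  then show ?case by simp
next
  case (Suc k)
  let ?Z = "zeta L n" and ?q = "quot L (zeta L n)"
  have iZ: "ideal L ?Z" by (rule ideal_zeta)
  have sZ: "subspace L ?Z" by (rule subspace_zeta)
  have q0: "lzero ?q = coset L ?Z \<zero>" using coset_zero[OF sZ] quot_zero by simp
  have "coset L ?Z x = lzero ?q" if x: "x \<in> V" and xk: "\<forall>y\<in>V. lie ?q (coset L ?Z x) (coset L ?Z y) \<in> zeta ?q k" for x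
  proof -
    have "\<lbrace>x,y\<rbrace> \<in> ?Z" if y: "y \<in> V" for y
    proof -
      have "coset L ?Z \<lbrace>x,y\<rbrace> = lie ?q (coset L ?Z x) (coset L ?Z y)"
        using quot_lie[OF iZ x y] by simp
      also have "\<dots> = coset L ?Z \<zero>" using xk y Suc.IH q0 by simp
      finally have "coset L ?Z \<lbrace>x,y\<rbrace> = coset L ?Z \<zero>" .
      then show ?thesis using coset_eq_iff[OF sZ zero_closed lie_closed[OF x y]] x y by simp
    qed
    then have "x \<in> ?Z" using absorb x by auto
    then show ?thesis using coset_eq_ideal[OF sZ] quot_zero by simp
  qed
  moreover have "lie ?q (lzero ?q) (coset L ?Z y) = lzero ?q" if "y \<in> V" for y
    using that q0 by (simp add: quot_lie[OF iZ])
  ultimately show ?case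
    using Suc.IH coset_self[OF sZ] by (auto simp: quot_carrier q0 ball_simps(9))
qed

lemma zeta_quot_zeta:
  assumes fr: "frattini L = {\<zero>}"
  shows "zeta (quot L (zeta L n)) n = {lzero (quot L (zeta L n))}"
proof (cases n)
  case (Suc m)
  have "zeta L (Suc n) \<subseteq> zeta L n"
    using zeta_Suc_eq_zeta_1[OF fr, of n] zeta_Suc_eq_zeta_1[OF fr, of m] Suc by (simp only:)
  then show ?thesis by (rule zeta_quot_zeta_trivial)
qed simp

end

lemma leib_hom_zero:
  assumes "leibniz_algebra A" "leibniz_algebra B" "leib_hom f A B"
  shows "f (lzero A) = lzero B"
proof -
  interpret A: leibniz A by (rule leibniz.intro) (rule assms(1))
  interpret B: leibniz B by (rule leibniz.intro) (rule assms(2))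
  have "f (lzero A) = f (lsmul A 0 (lzero A))" by simp
  also have "\<dots> = lsmul B 0 (f (lzero A))" using leib_homD(3)[OF assms(3) A.zero_closed A.zero_closed] .
  also have "\<dots> = lzero B" using leib_homD(1)[OF assms(3) A.zero_closed A.zero_closed] by simp
  finally show ?thesis .
qed

lemma leibniz_sub:
  fixes L :: "('k::field, 'v) leib"
  assumes "leibniz_algebra L" "ideal L I"
  shows "leibniz_algebra (sub L I)"
proof -
  interpret leibniz L by (rule leibniz.intro) (rule assms(1))
  have "I \<subseteq> V" "\<zero> \<in> I" using subspaceD(1,2)[OF ideal_subspace[OF assms(2)]] .
  then show ?thesis
    using assms(2) subspace_neg[OF ideal_subspace[OF assms(2)]]
    unfolding leibniz_algebra_def Let_def ideal_def subspace_def sub_simps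
    by (auto simp: subset_iff add_ac smul_add add_smul mult_smul
        br_add_left br_add_right br_smul_left br_smul_right leibniz_identity)
qed

section \<open>Lie-isoclinism\<close>

definition lie_isoclinism ::
  "nat \<Rightarrow> ('k, 'v) leib \<Rightarrow> ('k, 'w) leib \<Rightarrow> ('v set \<Rightarrow> 'w set) \<Rightarrow> ('v \<Rightarrow> 'w) \<Rightarrow> bool" where
  "lie_isoclinism n L1 L2 \<eta> \<xi> \<longleftrightarrow>
     leib_iso \<eta> (quot L1 (zeta L1 n)) (quot L2 (zeta L2 n)) \<and>
     leib_iso \<xi> (sub L1 (gamma L1 (Suc n))) (sub L2 (gamma L2 (Suc n))) \<and>
     (\<forall>xs ys. (\<forall>i\<le>n. xs i \<in> lcarrier L1 \<and> ys i \<in> lcarrier L2 \<and>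
                 \<eta> (coset L1 (zeta L1 n) (xs i)) = coset L2 (zeta L2 n) (ys i))
             \<longrightarrow> \<xi> (lie_iter L1 xs n) = lie_iter L2 ys n)"

lemma lie_isoclinic_iff: "lie_isoclinic n L1 L2 \<longleftrightarrow> (\<exists>\<eta> \<xi>. lie_isoclinism n L1 L2 \<eta> \<xi>)"
  unfolding lie_isoclinic_def lie_isoclinism_def ..

lemma lie_isoclinic_quot_zeta:
  fixes g :: "('k::field, 'v) leib"
  assumes g: "leibniz_algebra g"
    and trivial: "zeta g n \<inter> gamma g (Suc n) \<subseteq> {lzero g}"
    and zq: "zeta (quot g (zeta g n)) n = {lzero (quot g (zeta g n))}"
  shows "lie_isoclinic n (quot g (zeta g n)) g"
proof -
  interpret G: leibniz g by (rule leibniz.intro) (rule g)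
  define Z where "Z = zeta g n"
  define q where "q = quot g Z"
  define \<Gamma> where "\<Gamma> = gamma g (Suc n)"
  have iZ: "ideal g Z" unfolding Z_def by (rule G.ideal_zeta)
  interpret Q: leibniz q unfolding q_def by (rule leibniz.intro) (rule G.leibniz_quot[OF iZ])
  have inj: "inj_on (coset g Z) \<Gamma>"
    using G.inj_on_coset G.subspace_zeta G.ideal_subspace[OF G.ideal_gamma] trivial
    unfolding Z_def \<Gamma>_def by blast
  have "leib_iso (coset g Z) (sub g \<Gamma>) (sub q (gamma q (Suc n)))"
    unfolding leib_iso_def bij_betw_def
    using leib_hom_sub[OF G.leib_hom_coset[OF iZ] G.gamma_subset] inj G.gamma_quot[OF iZ]
    unfolding q_def \<Gamma>_def by simp
  then have \<xi>: "leib_iso (inv_into \<Gamma> (coset g Z)) (sub q (gamma q (Suc n))) (sub g \<Gamma>)"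
    using leib_iso_inv_into leib_closed_sub[OF G.ideal_gamma] unfolding \<Gamma>_def by fastforce
  have \<eta>: "leib_iso (inv_into (lcarrier q) (coset q {lzero q})) (quot q {lzero q}) q"
    by (rule leib_iso_inv_into[OF Q.leib_iso_coset_zero Q.leib_closed])
  have inj_q: "inj_on (coset q {lzero q}) (lcarrier q)"
    using Q.leib_iso_coset_zero unfolding leib_iso_def bij_betw_def by blast
  have zq': "zeta q n = {lzero q}" using zq unfolding q_def Z_def .
  have "lie_isoclinism n q g (inv_into (lcarrier q) (coset q {lzero q})) (inv_into \<Gamma> (coset g Z))"
    unfolding lie_isoclinism_def Z_def[symmetric] q_def[symmetric] zq' \<Gamma>_def[symmetric]
  proof (intro conjI allI impI)
    fix xs ys assume H: "\<forall>i\<le>n. xs i \<in> lcarrier q \<and> ys i \<in> lcarrier g \<and>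
        inv_into (lcarrier q) (coset q {lzero q}) (coset q {lzero q} (xs i)) = coset g Z (ys i)"
    then have "\<forall>i\<le>n. xs i = coset g Z (ys i)" using inv_into_f_f[OF inj_q] by auto
    then have "lie_iter q xs n = lie_iter q (\<lambda>i. coset g Z (ys i)) n" by (rule lie_iter_cong)
    also have "\<dots> = coset g Z (lie_iter g ys n)"
      unfolding q_def using G.lie_iter_quot[OF iZ] H by simp
    finally have "lie_iter q xs n = coset g Z (lie_iter g ys n)" .
    moreover have "lie_iter g ys n \<in> \<Gamma>" unfolding \<Gamma>_def using G.lie_iter_in_gamma H by blast
    ultimately show "inv_into \<Gamma> (coset g Z) (lie_iter q xs n) = lie_iter g ys n"
      using inv_into_f_f[OF inj] by simp
  qed (fact \<eta> \<xi>)+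
  then show ?thesis unfolding lie_isoclinic_iff q_def Z_def by blast
qed

lemma lie_isoclinism_coset_lie_iters:
  fixes h :: "('k::field, 'w) leib" and g :: "('k, 'v) leib"
  assumes h: "leibniz_algebra h" and g: "leibniz_algebra g"
    and iso: "lie_isoclinism n h g \<eta> \<xi>" and w: "w \<in> lie_iters h n"
  shows "coset g (zeta g n) (\<xi> w) = \<eta> (coset h (zeta h n) w)"
proof -
  interpret H: leibniz h by (rule leibniz.intro) (rule h)
  interpret G: leibniz g by (rule leibniz.intro) (rule g)
  let ?Zh = "zeta h n" and ?Zg = "zeta g n"
  interpret QH: leibniz "quot h ?Zh" by (rule leibniz.intro) (rule H.leibniz_quot[OF H.ideal_zeta])
  have \<eta>: "leib_hom \<eta> (quot h ?Zh) (quot g ?Zg)" using iso unfolding lie_isoclinism_def leib_iso_def by blast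
  obtain xs where w: "w = lie_iter h xs n" and xs: "\<forall>i. xs i \<in> lcarrier h"
    using w unfolding lie_iters_def by blast
  have "\<forall>i. \<exists>y. y \<in> lcarrier g \<and> \<eta> (coset h ?Zh (xs i)) = coset g ?Zg y"
  proof
    fix i
    have xi: "coset h ?Zh (xs i) \<in> lcarrier (quot h ?Zh)" using xs by (simp add: H.quot_carrier)
    then show "\<exists>y. y \<in> lcarrier g \<and> \<eta> (coset h ?Zh (xs i)) = coset g ?Zg y"
      using leib_homD(1)[OF \<eta> xi xi] unfolding G.quot_carrier by blast
  qed
  then obtain ys where ys: "\<forall>i. ys i \<in> lcarrier g \<and> \<eta> (coset h ?Zh (xs i)) = coset g ?Zg (ys i)"
    by (rule choice[THEN exE])
  have "\<xi> w = lie_iter g ys n" using iso xs ys unfolding w lie_isoclinism_def by blast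
  then have "coset g ?Zg (\<xi> w) = coset g ?Zg (lie_iter g ys n)" by simp
  also have "\<dots> = lie_iter (quot g ?Zg) (\<lambda>i. \<eta> (coset h ?Zh (xs i))) n"
    using G.lie_iter_quot[OF G.ideal_zeta] ys by simp
  also have "\<dots> = \<eta> (lie_iter (quot h ?Zh) (\<lambda>i. coset h ?Zh (xs i)) n)"
    using leib_hom_lie_iter[OF \<eta> QH.leib_closed] xs by (simp add: H.quot_carrier)
  also have "\<dots> = \<eta> (coset h ?Zh w)" using H.lie_iter_quot[OF H.ideal_zeta] xs w by simp
  finally show ?thesis .
qed

text \<open>Both sides are linear in \<open>w\<close> and agree on the generators \<open>lie_iters h n\<close>.\<close>

lemma lie_isoclinism_coset_gamma:
  fixes h :: "('k::field, 'w) leib" and g :: "('k, 'v) leib"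
  assumes h: "leibniz_algebra h" and g: "leibniz_algebra g"
    and iso: "lie_isoclinism n h g \<eta> \<xi>" and w: "w \<in> gamma h (Suc n)"
  shows "coset g (zeta g n) (\<xi> w) = \<eta> (coset h (zeta h n) w)"
proof -
  interpret H: leibniz h by (rule leibniz.intro) (rule h)
  interpret G: leibniz g by (rule leibniz.intro) (rule g)
  let ?\<Gamma>h = "gamma h (Suc n)" and ?qg = "quot g (zeta g n)"
  let ?F = "coset g (zeta g n) \<circ> \<xi>" and ?G = "\<eta> \<circ> coset h (zeta h n)"
  interpret QG: leibniz ?qg by (rule leibniz.intro) (rule G.leibniz_quot[OF G.ideal_zeta])
  have \<Gamma>h: "leibniz_algebra (sub h ?\<Gamma>h)" by (rule leibniz_sub[OF h H.ideal_gamma])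
  have \<eta>: "leib_hom \<eta> (quot h (zeta h n)) ?qg"
    and \<xi>: "leib_hom \<xi> (sub h ?\<Gamma>h) (sub g (gamma g (Suc n)))"
    using iso unfolding lie_isoclinism_def leib_iso_def by blast+
  have F: "leib_hom ?F (sub h ?\<Gamma>h) ?qg"
    by (rule leib_hom_comp[OF \<xi> leib_hom_restrict[OF G.leib_hom_coset[OF G.ideal_zeta] G.gamma_subset]])
  have G: "leib_hom ?G (sub h ?\<Gamma>h) ?qg"
    by (rule leib_hom_comp[OF leib_hom_restrict[OF H.leib_hom_coset[OF H.ideal_zeta] H.gamma_subset] \<eta>])
  have "subspace h {w \<in> ?\<Gamma>h. ?F w = ?G w}"
    using QG.subspace_equalizer[OF leib_closed_sub[OF H.ideal_gamma] F G]
      leib_hom_zero[OF \<Gamma>h QG.leibniz F] leib_hom_zero[OF \<Gamma>h QG.leibniz G]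
    by (auto intro: subspace_sub[OF _ H.gamma_subset])
  moreover have "lie_iters h n \<subseteq> {w \<in> ?\<Gamma>h. ?F w = ?G w}"
    using lie_isoclinism_coset_lie_iters[OF h g iso] H.lie_iters_subset
    unfolding H.gamma_eq_span_lie_iters using H.span_superset by fastforce
  ultimately have "?\<Gamma>h \<subseteq> {w \<in> ?\<Gamma>h. ?F w = ?G w}"
    unfolding H.gamma_eq_span_lie_iters by (rule H.span_least)
  then show ?thesis using w by auto
qed

lemma lie_stem_isoclinism_zeta_trivial:
  fixes h :: "('k::field, 'w) leib" and g :: "('k, 'v) leib"
  assumes h: "leibniz_algebra h" and g: "leibniz_algebra g"
    and stem: "lie_stem n h" and iso: "lie_isoclinism n h g \<eta> \<xi>"
    and trivial: "zeta g n \<inter> gamma g (Suc n) \<subseteq> {lzero g}"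
  shows "zeta h n = {lzero h}"
proof -
  interpret H: leibniz h by (rule leibniz.intro) (rule h)
  interpret G: leibniz g by (rule leibniz.intro) (rule g)
  have \<eta>: "leib_hom \<eta> (quot h (zeta h n)) (quot g (zeta g n))"
    and \<xi>: "leib_hom \<xi> (sub h (gamma h (Suc n))) (sub g (gamma g (Suc n)))"
    and inj: "inj_on \<xi> (gamma h (Suc n))"
    using iso unfolding lie_isoclinism_def leib_iso_def bij_betw_def by auto
  have sZh: "subspace h (zeta h n)" and sZg: "subspace g (zeta g n)"
    by (rule H.subspace_zeta G.subspace_zeta)+
  have \<xi>0: "\<xi> (lzero h) = lzero g"
    using leib_hom_zero[OF leibniz_sub[OF h H.ideal_gamma] leibniz_sub[OF g G.ideal_gamma] \<xi>]
    by simp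
  have \<eta>0: "\<eta> (zeta h n) = zeta g n"
    using leib_hom_zero[OF H.leibniz_quot[OF H.ideal_zeta] G.leibniz_quot[OF G.ideal_zeta] \<eta>]
    by (simp add: quot_def)
  have "z = lzero h" if z: "z \<in> zeta h n" for z
  proof -
    have z\<Gamma>: "z \<in> gamma h (Suc n)" using stem z unfolding lie_stem_def by blast
    have \<xi>z: "\<xi> z \<in> gamma g (Suc n)" using leib_homD(1)[OF \<xi>] z\<Gamma> by simp
    have "coset g (zeta g n) (\<xi> z) = \<eta> (coset h (zeta h n) z)"
      by (rule lie_isoclinism_coset_gamma[OF h g iso z\<Gamma>])
    also have "\<dots> = coset g (zeta g n) (lzero g)"
      using H.coset_eq_ideal[OF sZh z] G.coset_zero[OF sZg] \<eta>0 by simp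
    finally have "\<xi> z \<in> zeta g n"
      using G.coset_eq_iff[OF sZg G.zero_closed, of "\<xi> z"] \<xi>z G.gamma_subset by auto
    then have "\<xi> z = \<xi> (lzero h)" using trivial \<xi>z \<xi>0 by auto
    then show "z = lzero h" using inj_onD[OF inj _ z\<Gamma> H.zero_in_gamma] by blast
  qed
  then show ?thesis using H.subspaceD(2)[OF sZh] by blast
qed

lemma lie_stem_isoclinic_isomorphic_quot:
  fixes h :: "('k::field, 'w) leib" and g :: "('k, 'v) leib"
  assumes h: "leibniz_algebra h" and g: "leibniz_algebra g"
    and stem: "lie_stem n h" and iso: "lie_isoclinic n h g"
    and trivial: "zeta g n \<inter> gamma g (Suc n) \<subseteq> {lzero g}"
  shows "leib_isomorphic h (quot g (zeta g n))"
proof -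
  interpret H: leibniz h by (rule leibniz.intro) (rule h)
  obtain \<eta> \<xi> where iso': "lie_isoclinism n h g \<eta> \<xi>" using iso unfolding lie_isoclinic_iff by blast
  then have "zeta h n = {lzero h}" by (rule lie_stem_isoclinism_zeta_trivial[OF h g stem _ trivial])
  then have "leib_iso \<eta> (quot h {lzero h}) (quot g (zeta g n))"
    using iso' unfolding lie_isoclinism_def by simp
  then have "leib_iso (\<eta> \<circ> coset h {lzero h}) h (quot g (zeta g n))"
    by (rule leib_iso_comp[OF H.leib_iso_coset_zero])
  then show ?thesis unfolding leib_isomorphic_def by blast
qed

theorem mainTheorem16:
  fixes g :: "('k::field, 'v) leib" and n :: nat
  assumes "(2::'k) \<noteq> 0"
    and "leibniz_algebra g"
    and "frattini g = {lzero g}"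
  shows "leibniz_algebra (quot g (zeta g n)) \<and>
         lie_stem n (quot g (zeta g n)) \<and>
         lie_isoclinic n (quot g (zeta g n)) g \<and>
         (\<forall>h :: ('k, 'w) leib. leibniz_algebra h \<and> lie_stem n h \<and> lie_isoclinic n h g
              \<longrightarrow> leib_isomorphic h (quot g (zeta g n)))"
proof -
  interpret G: leibniz g by (rule leibniz.intro) (rule assms(2))
  let ?q = "quot g (zeta g n)"
  have quot: "leibniz_algebra ?q" by (rule G.leibniz_quot[OF G.ideal_zeta])
  have trivial: "zeta g n \<inter> gamma g (Suc n) \<subseteq> {lzero g}"
    using G.zeta_inter_gamma[OF assms(3)] by blast
  have zq: "zeta ?q n = {lzero ?q}" by (rule G.zeta_quot_zeta[OF assms(3)])
  have "lie_stem n ?q" by (rule leibniz.lie_stem_if_zeta_trivial[OF leibniz.intro[OF quot] zq])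
  then show ?thesis
    using quot lie_isoclinic_quot_zeta[OF assms(2) trivial zq]
      lie_stem_isoclinic_isomorphic_quot[OF _ assms(2) _ _ trivial] by blast
qed

end
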